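(* Consider the problem and the UCGS algorithm described in the context, where $f$ has $\nu$-Hölder continuous gradient with constant $M_\nu$, and run UCGS with parameters $$\beta_k=L_k\gamma_k,\qquad \eta_k=\frac{L_k\gamma_kD_X^2}{k},\qquad \varepsilon_k=\frac{\sigma L_k\gamma_k^2D_X^2}{2},$$ and, inside each call of the ACGM procedure (with $\beta=\beta_k$), tolerances $\delta^t=\sigma\beta_kD_X^2/t$ and exact line-search step sizes $\alpha^t\in\arg\min_{\alpha\in[0,1]}\phi((1-\alpha)u^{t-1}+\alpha v^t)$, where $\sigma\ge0$. Then UCGS terminates with an $\varepsilon$-solution after at most $N_{\mathrm{grad}}$ gradient evaluations and $N_{\mathrm{lin}}$ linear objective optimizations, where $$N_{\mathrm{grad}}:=\Big\lceil16\Big(\frac{(3+\sigma)^{\frac{1+\nu}{2}}M_\nu D_X^{1+\nu}}{\varepsilon}\Big)^{\frac{2}{1+3\nu}}\Big\rceil,\qquad N_{\mathrm{lin}}:=\Big\lceil\Big(\tfrac72\sigma+3\Big)N_{\mathrm{grad}}^2+\Big(\tfrac72\sigma+6\Big)N_{\mathrm{grad}}\Big\rceil.$$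
   Context: Problem: $\min_{x\in X}f(x)$, where $X\subset\mathbb{R}^n$ is nonempty, compact, convex, with diameter $D_X=\max_{x,y\in X}\|x-y\|$ (Euclidean norm), and $f$ is convex and differentiable with $\|\nabla f(x)-\nabla f(y)\|\le M_\nu\|x-y\|^\nu$ for all $x,y\in X$, for some $\nu\in[0,1]$, $M_\nu>0$ (unknown to the algorithm). Let $f^*=\min_X f$; $y\in X$ is an $\varepsilon$-solution if $f(y)-f^*\le\varepsilon$. ACGM procedure with input $(g,u,\beta,\eta)$, $u\in X$: with $\phi(x)=\langle g,x\rangle+\frac\beta2\|x-u\|^2$, set $u^0=u$; for $t=1,2,\dots$ compute $v^t\in X$ with $\langle\nabla\phi(u^{t-1}),v^t-x\rangle\le\delta^t$ for all $x\in X$ (one linear objective optimization); if $\langle\nabla\phi(u^{t-1}),u^{t-1}-v^t\rangle\le\eta-\delta^t$ output $u^{t-1}$, else $u^t=(1-\alpha^t)u^{t-1}+\alpha^tv^t$. UCGS (universal conditional gradient sliding) with accuracy $\varepsilon>0$, start $x_0\in X$, $y_0:=x_0$: at outer iteration $k=1,2,\dots$ (one gradient evaluation $\nabla f(z_k)$ counted per outer iteration), for a trial $L_k>0$ set $\gamma_1=1$ and, for $k\ge2$, $\gamma_k\in(0,1]$ solving $L_k\gamma_k^2/k=\Gamma_{k-1}(1-\gamma_k)$; $\Gamma_k:=L_k\gamma_k^2/k$; $z_k=(1-\gamma_k)y_{k-1}+\gamma_kx_{k-1}$; $x_k:=$ output of ACGM with $g=\nabla f(z_k)$, $u=x_{k-1}$,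 $\beta=\beta_k$, $\eta=\eta_k$; $y_k=(1-\gamma_k)y_{k-1}+\gamma_kx_k$; the trial $L_k$ is accepted iff $f(y_k)\le f(z_k)+\langle\nabla f(z_k),y_k-z_k\rangle+\frac{L_k}{2}\|y_k-z_k\|^2+\frac{\varepsilon}{2}\gamma_k$, $L_k$ being found by backtracking (doubling trial values) so that the inequality fails with $L_k$ replaced by $L_k/2$. Then with $\ell_k(x):=\Gamma_k\sum_{i=1}^k\frac{\gamma_i}{\Gamma_i}(f(z_i)+\langle\nabla f(z_i),x-z_i\rangle)$, compute (by one linear objective optimization) $s_k\in X$ with $\ell_k(s_k)\le\min_{x\in X}\ell_k(x)+\varepsilon_k$, and stop with output $y_k$ if $f(y_k)-\ell_k(s_k)\le\varepsilon-\varepsilon_k$. *)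

theory Defs
  imports "HOL-Analysis.Analysis"
begin

definition acgm_phi :: "'a::real_inner \<Rightarrow> 'a \<Rightarrow> real \<Rightarrow> 'a \<Rightarrow> real" where
  "acgm_phi g u \<beta> w = inner g w + \<beta> / 2 * (norm (w - u))^2"

definition acgm_grad :: "'a::real_inner \<Rightarrow> 'a \<Rightarrow> real \<Rightarrow> 'a \<Rightarrow> 'a" where
  "acgm_grad g u \<beta> w = g + \<beta> *\<^sub>R (w - u)"

definition acgm_delta :: "real \<Rightarrow> real \<Rightarrow> real \<Rightarrow> nat \<Rightarrow> real" where
  "acgm_delta \<sigma> \<beta> D t = \<sigma> * \<beta> * D^2 / real t"

text \<open>A (partial) ACGM execution performing t linear optimizations (v^1..v^t),
  where the stopping test failed at steps 1..t-1 and exact line search was used.\<close>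
definition acgm_steps ::
  "'a::real_inner set \<Rightarrow> real \<Rightarrow> real \<Rightarrow> 'a \<Rightarrow> 'a \<Rightarrow> real \<Rightarrow> real
    \<Rightarrow> (nat \<Rightarrow> 'a) \<Rightarrow> (nat \<Rightarrow> 'a) \<Rightarrow> nat \<Rightarrow> bool" where
  "acgm_steps X \<sigma> D g u \<beta> \<eta> us vs t \<longleftrightarrow>
     us 0 = u \<and>
     (\<forall>j\<in>{1..t}. vs j \<in> X \<and>
        (\<forall>w\<in>X. inner (acgm_grad g u \<beta> (us (j-1))) (vs j - w) \<le> acgm_delta \<sigma> \<beta> D j)) \<and>
     (\<forall>j\<in>{1..<t}.
        inner (acgm_grad g u \<beta> (us (j-1))) (us (j-1) - vs j) > \<eta> - acgm_delta \<sigma> \<beta> D j \<and>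
        (\<exists>\<alpha>\<in>{0..1}.
           (\<forall>a\<in>{0..1}. acgm_phi g u \<beta> ((1-\<alpha>) *\<^sub>R us (j-1) + \<alpha> *\<^sub>R vs j)
                         \<le> acgm_phi g u \<beta> ((1-a) *\<^sub>R us (j-1) + a *\<^sub>R vs j)) \<and>
           us j = (1-\<alpha>) *\<^sub>R us (j-1) + \<alpha> *\<^sub>R vs j))"

definition acgm_run ::
  "'a::real_inner set \<Rightarrow> real \<Rightarrow> real \<Rightarrow> 'a \<Rightarrow> 'a \<Rightarrow> real \<Rightarrow> real \<Rightarrow> nat \<Rightarrow> 'a \<Rightarrow> bool" where
  "acgm_run X \<sigma> D g u \<beta> \<eta> T out \<longleftrightarrow> 1 \<le> T \<and>
     (\<exists>us vs. acgm_steps X \<sigma> D g u \<beta> \<eta> us vs T \<and>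
        inner (acgm_grad g u \<beta> (us (T-1))) (us (T-1) - vs T) \<le> \<eta> - acgm_delta \<sigma> \<beta> D T \<and>
        out = us (T-1))"

text \<open>gamma-rule for a trial value Lt at iteration k (Gp = Gamma_{k-1}).\<close>
definition ucgs_gamma_ok :: "nat \<Rightarrow> real \<Rightarrow> real \<Rightarrow> real \<Rightarrow> bool" where
  "ucgs_gamma_ok k Gp Lt \<gamma> \<longleftrightarrow> Lt > 0 \<and> 0 < \<gamma> \<and> \<gamma> \<le> 1 \<and>
     (if k = 1 then \<gamma> = 1 else Lt * \<gamma>^2 / real k = Gp * (1 - \<gamma>))"

text \<open>One trial of outer iteration k with trial value Lt, starting from
  x_{k-1} = xp, y_{k-1} = yp; ACGM uses T linear optimizations.\<close>
definition ucgs_trial ::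
  "('a::real_inner \<Rightarrow> 'a) \<Rightarrow> 'a set \<Rightarrow> real \<Rightarrow> real \<Rightarrow> nat \<Rightarrow> real \<Rightarrow> 'a \<Rightarrow> 'a
    \<Rightarrow> real \<Rightarrow> real \<Rightarrow> 'a \<Rightarrow> 'a \<Rightarrow> 'a \<Rightarrow> nat \<Rightarrow> bool" where
  "ucgs_trial G X \<sigma> D k Gp xp yp Lt \<gamma> z xk yk T \<longleftrightarrow>
     ucgs_gamma_ok k Gp Lt \<gamma> \<and>
     z = (1-\<gamma>) *\<^sub>R yp + \<gamma> *\<^sub>R xp \<and>
     acgm_run X \<sigma> D (G z) xp (Lt * \<gamma>) (Lt * \<gamma> * D^2 / real k) T xk \<and>
     yk = (1-\<gamma>) *\<^sub>R yp + \<gamma> *\<^sub>R xk"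

definition ucgs_accept ::
  "('a::real_inner \<Rightarrow> real) \<Rightarrow> ('a \<Rightarrow> 'a) \<Rightarrow> real \<Rightarrow> real \<Rightarrow> real \<Rightarrow> 'a \<Rightarrow> 'a \<Rightarrow> bool" where
  "ucgs_accept f G \<epsilon> Lt \<gamma> z yk \<longleftrightarrow>
     f yk \<le> f z + inner (G z) (yk - z) + Lt / 2 * (norm (yk - z))^2 + \<epsilon> / 2 * \<gamma>"

definition ucgs_Gamma :: "(nat \<Rightarrow> real) \<Rightarrow> (nat \<Rightarrow> real) \<Rightarrow> nat \<Rightarrow> real" where
  "ucgs_Gamma L \<gamma> k = L k * (\<gamma> k)^2 / real k"

definition ucgs_ell ::
  "('a::real_inner \<Rightarrow> real) \<Rightarrow> ('a \<Rightarrow> 'a) \<Rightarrow> (nat \<Rightarrow> real) \<Rightarrow> (nat \<Rightarrow> real) \<Rightarrow> (nat \<Rightarrow> 'a)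
    \<Rightarrow> nat \<Rightarrow> 'a \<Rightarrow> real" where
  "ucgs_ell f G L \<gamma> z k w = ucgs_Gamma L \<gamma> k *
     (\<Sum>i=1..k. \<gamma> i / ucgs_Gamma L \<gamma> i * (f (z i) + inner (G (z i)) (w - z i)))"

definition ucgs_epsk :: "real \<Rightarrow> real \<Rightarrow> (nat \<Rightarrow> real) \<Rightarrow> (nat \<Rightarrow> real) \<Rightarrow> nat \<Rightarrow> real" where
  "ucgs_epsk \<sigma> D L \<gamma> k = \<sigma> * L k * (\<gamma> k)^2 * D^2 / 2"

text \<open>Outer iteration k (accepted trial, the failed trial at L_k/2, and s_k).\<close>
definition ucgs_iter ::
  "('a::real_inner \<Rightarrow> real) \<Rightarrow> ('a \<Rightarrow> 'a) \<Rightarrow> 'a set \<Rightarrow> real \<Rightarrow> real \<Rightarrow> real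
    \<Rightarrow> (nat \<Rightarrow> real) \<Rightarrow> (nat \<Rightarrow> real) \<Rightarrow> (nat \<Rightarrow> 'a) \<Rightarrow> (nat \<Rightarrow> 'a) \<Rightarrow> (nat \<Rightarrow> 'a)
    \<Rightarrow> (nat \<Rightarrow> 'a) \<Rightarrow> (nat \<Rightarrow> nat) \<Rightarrow> nat \<Rightarrow> bool" where
  "ucgs_iter f G X \<sigma> D \<epsilon> L \<gamma> z x y s T k \<longleftrightarrow>
     ucgs_trial G X \<sigma> D k (ucgs_Gamma L \<gamma> (k-1)) (x (k-1)) (y (k-1))
        (L k) (\<gamma> k) (z k) (x k) (y k) (T k) \<and>
     ucgs_accept f G \<epsilon> (L k) (\<gamma> k) (z k) (y k) \<and>
     (\<exists>\<gamma>' z' x' y' T'. ucgs_trial G X \<sigma> D k (ucgs_Gamma L \<gamma> (k-1)) (x (k-1)) (y (k-1))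
          (L k / 2) \<gamma>' z' x' y' T' \<and> \<not> ucgs_accept f G \<epsilon> (L k / 2) \<gamma>' z' y') \<and>
     s k \<in> X \<and>
     (\<forall>w\<in>X. ucgs_ell f G L \<gamma> z k (s k) \<le> ucgs_ell f G L \<gamma> z k w + ucgs_epsk \<sigma> D L \<gamma> k)"

definition ucgs_stop ::
  "('a::real_inner \<Rightarrow> real) \<Rightarrow> ('a \<Rightarrow> 'a) \<Rightarrow> real \<Rightarrow> real \<Rightarrow> real
    \<Rightarrow> (nat \<Rightarrow> real) \<Rightarrow> (nat \<Rightarrow> real) \<Rightarrow> (nat \<Rightarrow> 'a) \<Rightarrow> (nat \<Rightarrow> 'a) \<Rightarrow> (nat \<Rightarrow> 'a)
    \<Rightarrow> nat \<Rightarrow> bool" where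
  "ucgs_stop f G \<sigma> D \<epsilon> L \<gamma> z y s k \<longleftrightarrow>
     f (y k) - ucgs_ell f G L \<gamma> z k (s k) \<le> \<epsilon> - ucgs_epsk \<sigma> D L \<gamma> k"

definition ucgs_prefix ::
  "('a::real_inner \<Rightarrow> real) \<Rightarrow> ('a \<Rightarrow> 'a) \<Rightarrow> 'a set \<Rightarrow> real \<Rightarrow> real \<Rightarrow> real \<Rightarrow> 'a
    \<Rightarrow> (nat \<Rightarrow> real) \<Rightarrow> (nat \<Rightarrow> real) \<Rightarrow> (nat \<Rightarrow> 'a) \<Rightarrow> (nat \<Rightarrow> 'a) \<Rightarrow> (nat \<Rightarrow> 'a)
    \<Rightarrow> (nat \<Rightarrow> 'a) \<Rightarrow> (nat \<Rightarrow> nat) \<Rightarrow> nat \<Rightarrow> bool" where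
  "ucgs_prefix f G X \<sigma> D \<epsilon> x0 L \<gamma> z x y s T K \<longleftrightarrow>
     x 0 = x0 \<and> y 0 = x0 \<and>
     (\<forall>k\<in>{1..K}. ucgs_iter f G X \<sigma> D \<epsilon> L \<gamma> z x y s T k) \<and>
     (\<forall>k\<in>{1..<K}. \<not> ucgs_stop f G \<sigma> D \<epsilon> L \<gamma> z y s k)"

definition N_grad :: "real \<Rightarrow> real \<Rightarrow> real \<Rightarrow> real \<Rightarrow> real \<Rightarrow> nat" where
  "N_grad \<sigma> \<nu> M D \<epsilon> = nat \<lceil>16 * (((3 + \<sigma>) powr ((1 + \<nu>) / 2) * M * D powr (1 + \<nu>)) / \<epsilon>)
                                 powr (2 / (1 + 3 * \<nu>))\<rceil>"

definition N_lin :: "real \<Rightarrow> nat \<Rightarrow> nat" where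
  "N_lin \<sigma> N = nat \<lceil>(7/2 * \<sigma> + 3) * (real N)^2 + (7/2 * \<sigma> + 6) * real N\<rceil>"

end

theory Submission
  imports Defs
begin

text \<open>
  For every \<open>w \<in> X\<close> the outer iterates satisfy the estimate-sequence inequality
  \<open>f(y\<^sub>k) + k\<Gamma>\<^sub>k/2 \<parallel>w - x\<^sub>k\<parallel>\<^sup>2 \<le> \<ell>\<^sub>k(w) + 3/2 k\<Gamma>\<^sub>k D\<^sup>2 + \<epsilon>/2\<close>, where the aggregated
  linear model \<open>\<ell>\<^sub>k\<close> minorizes \<open>f\<close>. So the stopping test can only fail while
  \<open>k\<Gamma>\<^sub>k (3 + \<sigma>) D\<^sup>2 > \<epsilon>\<close>, and once it succeeds \<open>y\<^sub>k\<close> is an \<open>\<epsilon>\<close>-solution.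
  A trial rejected at \<open>L\<^sub>k/2\<close> is impossible above Nesterov's threshold for the H\<ouml>lder term,
  hence \<open>L\<^sub>k < C \<gamma>\<^sub>k\<^sup>-\<^sup>p\<close> with \<open>p = (1 - \<nu>)/(1 + \<nu>)\<close>; together with
  \<open>\<Gamma>\<^sub>k = (1 - \<gamma>\<^sub>k) \<Gamma>\<^sub>k\<^sub>-\<^sub>1\<close>, which makes \<open>1/\<surd>\<Gamma>\<^sub>k\<close> grow by at least \<open>\<gamma>\<^sub>k/(2\<surd>\<Gamma>\<^sub>k)\<close> per
  step, this bounds \<open>k\<Gamma>\<^sub>k\<close> from above and forces \<open>k < N_grad/2\<close> while the method runs.

  Each ACGM call is the Frank-Wolfe method with exact line search on a \<open>\<beta>\<^sub>k\<close>-strongly convex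
  quadratic, stopped at the Wolfe gap \<open>\<eta>\<^sub>k = \<beta>\<^sub>kD\<^sup>2/k\<close>. It converges at rate \<open>O(1/j)\<close>, and
  after \<open>(2\<sigma> + 2)k\<close> steps every failed stopping test forces a decrease of order \<open>\<beta>\<^sub>kD\<^sup>2/k\<^sup>2\<close>,
  so a call uses at most \<open>(7\<sigma> + 6)k + 1\<close> linear optimizations; summing over \<open>k \<le> N_grad\<close>
  gives \<open>N_lin\<close>.
\<close>

section \<open>Convex functions with H\<ouml>lder continuous gradient\<close>

lemma has_real_derivative_along_line:
  fixes f :: "'a::real_normed_vector \<Rightarrow> real"
  assumes "(f has_derivative g) (at (a + t *\<^sub>R d))" "linear g"
  shows "((\<lambda>s. f (a + s *\<^sub>R d)) has_real_derivative g d) (at t)"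
proof -
  have "((\<lambda>s. a + s *\<^sub>R d) has_derivative (\<lambda>h. h *\<^sub>R d)) (at t)"
    by (auto intro!: derivative_eq_intros)
  from has_derivative_compose[OF this assms(1)]
  have "((\<lambda>s. f (a + s *\<^sub>R d)) has_derivative (\<lambda>h. h * g d)) (at t)"
    using linear_scale[OF assms(2)] by simp
  moreover have "(\<lambda>h. h * g d) = (*) (g d)" by (simp add: fun_eq_iff)
  ultimately show ?thesis by (simp add: has_field_derivative_def)
qed

lemma convex_on_gradient_inequality:
  fixes f :: "'a::real_inner \<Rightarrow> real"
  assumes "convex_on X f" and "(f has_derivative (\<lambda>h. inner g h)) (at a)"
    and "a \<in> X" and "b \<in> X"
  shows "f a + inner g (b - a) \<le> f b"
proof -
  let ?h = "\<lambda>s. f (a + s *\<^sub>R (b - a))"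
  have "(?h has_real_derivative inner g (b - a)) (at 0)"
    using has_real_derivative_along_line[of f _ a 0 "b - a"] assms(2)
    by (simp add: bounded_linear.linear bounded_linear_inner_right)
  hence "((\<lambda>s. (?h s - ?h 0) / s) \<longlongrightarrow> inner g (b - a)) (at_right 0)"
    unfolding has_field_derivative_iff by (simp add: filterlim_at_split)
  moreover have "eventually (\<lambda>s. (?h s - ?h 0) / s \<le> f b - f a) (at_right 0)"
    using eventually_at_right_real[OF zero_less_one]
  proof eventually_elim
    case (elim s)
    have "a + s *\<^sub>R (b - a) = (1 - s) *\<^sub>R a + s *\<^sub>R b" by (simp add: algebra_simps)
    moreover have "f ((1 - s) *\<^sub>R a + s *\<^sub>R b) \<le> (1 - s) * f a + s * f b"
      using convex_onD[OF assms(1), of s a b] elim assms(3,4) by auto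
    ultimately have "?h s - ?h 0 \<le> s * (f b - f a)" by (simp add: algebra_simps)
    thus ?case using elim by (simp add: divide_le_eq mult.commute)
  qed
  ultimately have "inner g (b - a) \<le> f b - f a" by (rule tendsto_upperbound) simp
  thus ?thesis by simp
qed

lemma holder_directional_increment:
  assumes holder: "\<forall>x\<in>X. \<forall>y\<in>X. norm (G x - G y) \<le> M * norm (x - y) powr \<nu>"
    and "z \<in> X" "z + \<xi> *\<^sub>R d \<in> X" "\<xi> > 0"
  shows "inner (G (z + \<xi> *\<^sub>R d) - G z) d \<le> M * norm d powr (1 + \<nu>) * \<xi> powr \<nu>"
proof -
  have "inner (G (z + \<xi> *\<^sub>R d) - G z) d \<le> norm (G (z + \<xi> *\<^sub>R d) - G z) * norm d"
    by (rule norm_cauchy_schwarz)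
  also have "\<dots> \<le> M * norm ((z + \<xi> *\<^sub>R d) - z) powr \<nu> * norm d"
    using holder assms(2,3) by (intro mult_right_mono) (blast, simp)
  also have "\<dots> = M * norm d powr (1 + \<nu>) * \<xi> powr \<nu>"
    using \<open>\<xi> > 0\<close> by (cases "d = 0") (simp_all add: powr_mult powr_add)
  finally show ?thesis .
qed

lemma holder_gradient_upper_bound:
  fixes f :: "'a::real_inner \<Rightarrow> real"
  assumes "convex X"
    and gradient: "\<forall>x\<in>X. (f has_derivative (\<lambda>h. inner (G x) h)) (at x)"
    and "0 \<le> \<nu>"
    and holder: "\<forall>x\<in>X. \<forall>y\<in>X. norm (G x - G y) \<le> M * norm (x - y) powr \<nu>"
    and z: "z \<in> X" and y: "y \<in> X"
  shows "f y \<le> f z + inner (G z) (y - z) + M / (1 + \<nu>) * norm (y - z) powr (1 + \<nu>)"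
proof -
  define d where "d = y - z"
  define r where "r = norm d"
  define \<psi> where "\<psi> t = f (z + t *\<^sub>R d) - t * inner (G z) d
      - M / (1 + \<nu>) * r powr (1 + \<nu>) * t powr (1 + \<nu>)" for t
  have in_X: "z + t *\<^sub>R d \<in> X" if "0 \<le> t" "t \<le> 1" for t
    using convexD_alt[OF \<open>convex X\<close> z y, of t] that by (simp add: d_def algebra_simps)
  have deriv_f: "((\<lambda>s. f (z + s *\<^sub>R d)) has_real_derivative inner (G (z + t *\<^sub>R d)) d) (at t)"
    if "0 \<le> t" "t \<le> 1" for t
    using has_real_derivative_along_line gradient in_X[OF that]
    by (metis bounded_linear.linear bounded_linear_inner_right)
  have cont_f: "continuous_on {0..1} (\<lambda>s. f (z + s *\<^sub>R d))"
    using deriv_f by (intro continuous_at_imp_continuous_on) (metis DERIV_isCont atLeastAtMost_iff)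
  have cont_powr: "continuous_on {0..1} (\<lambda>t::real. t powr (1 + \<nu>))"
    by (rule continuous_on_powr') (use \<open>0 \<le> \<nu>\<close> in \<open>auto intro: continuous_on_id\<close>)
  have "continuous_on {0..1} \<psi>"
    unfolding \<psi>_def by (intro continuous_intros cont_f cont_powr)
  moreover have deriv_\<psi>: "(\<psi> has_real_derivative (inner (G (z + t *\<^sub>R d) - G z) d
      - M * r powr (1 + \<nu>) * t powr \<nu>)) (at t)" if "0 < t" "t < 1" for t
  proof -
    have "((\<lambda>t. t powr (1 + \<nu>)) has_real_derivative (1 + \<nu>) * t powr \<nu>) (at t)"
      using has_real_derivative_powr[of t "1 + \<nu>"] that by simp
    hence "(\<psi> has_real_derivative (inner (G (z + t *\<^sub>R d)) d - inner (G z) d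
        - M / (1 + \<nu>) * r powr (1 + \<nu>) * ((1 + \<nu>) * t powr \<nu>))) (at t)"
      unfolding \<psi>_def by (intro derivative_eq_intros deriv_f) (use that in \<open>auto intro: deriv_f\<close>)
    thus ?thesis using \<open>0 \<le> \<nu>\<close> by (simp add: inner_diff_left mult.assoc)
  qed
  ultimately obtain l \<xi> where \<xi>: "0 < \<xi>" "\<xi> < 1"
    and l: "DERIV \<psi> \<xi> :> l" "\<psi> 1 - \<psi> 0 = (1 - 0) * l"
    using MVT[OF zero_less_one, of \<psi>] by (meson real_differentiable_def)
  hence mvt: "\<psi> 1 - \<psi> 0 = inner (G (z + \<xi> *\<^sub>R d) - G z) d - M * r powr (1 + \<nu>) * \<xi> powr \<nu>"
    using DERIV_unique[OF l(1) deriv_\<psi>[OF \<xi>]] by simp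
  have "inner (G (z + \<xi> *\<^sub>R d) - G z) d \<le> M * r powr (1 + \<nu>) * \<xi> powr \<nu>"
    unfolding r_def using holder_directional_increment[OF holder z in_X] \<xi> by simp
  hence "\<psi> 1 \<le> \<psi> 0" using mvt by simp
  thus ?thesis by (simp add: \<psi>_def d_def r_def)
qed

lemma holder_constant_le_weighted_mean:
  fixes \<nu> M \<delta> L :: real
  assumes "0 \<le> \<nu>" "M > 0" "\<delta> > 0"
    and L: "M powr (2 / (1 + \<nu>)) * \<delta> powr (- ((1 - \<nu>) / (1 + \<nu>))) \<le> L"
  shows "M \<le> L powr ((1 + \<nu>) / 2) * \<delta> powr ((1 - \<nu>) / 2)"
proof -
  define \<theta> where "\<theta> = (1 + \<nu>) / 2"
  have \<theta>: "\<theta> > 0" "2 / (1 + \<nu>) * \<theta> = 1" "- ((1 - \<nu>) / (1 + \<nu>)) * \<theta> = - ((1 - \<nu>) / 2)"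
    using assms(1) by (auto simp: \<theta>_def field_simps)
  have "M * \<delta> powr (- ((1 - \<nu>) / 2))
      = (M powr (2 / (1 + \<nu>)) * \<delta> powr (- ((1 - \<nu>) / (1 + \<nu>)))) powr \<theta>"
    using assms(2) by (simp only: powr_mult powr_powr \<theta>(2,3)) simp
  also have "\<dots> \<le> L powr \<theta>"
    using L \<theta>(1) assms(2,3) by (intro powr_mono2) auto
  finally have "M * \<delta> powr (- ((1 - \<nu>) / 2)) * \<delta> powr ((1 - \<nu>) / 2)
      \<le> L powr \<theta> * \<delta> powr ((1 - \<nu>) / 2)"
    by (intro mult_right_mono) auto
  thus ?thesis
    using assms(3) by (simp add: \<theta>_def mult.assoc powr_add[symmetric])
qed

lemma young_holder_term:
  fixes \<nu> \<delta> L r :: real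
  assumes \<nu>: "0 \<le> \<nu>" "\<nu> < 1" and "L > 0" "\<delta> > 0" "r > 0"
  shows "L powr ((1 + \<nu>) / 2) * \<delta> powr ((1 - \<nu>) / 2) * r powr (1 + \<nu>) / (1 + \<nu>)
    \<le> L / 2 * r^2 + \<delta> / 2"
proof -
  define \<theta> where "\<theta> = (1 + \<nu>) / 2"
  define \<theta>' where "\<theta>' = (1 - \<nu>) / 2"
  define A where "A = L * r^2 / (1 + \<nu>)"
  define B where "B = \<delta> / (1 - \<nu>)"
  have \<theta>: "0 < \<theta>" "0 < \<theta>'" "\<theta> + \<theta>' = 1" "2 * \<theta> = 1 + \<nu>"
    using \<nu> by (auto simp: \<theta>_def \<theta>'_def field_simps)
  have "A > 0" "B > 0"
    using assms by (auto simp: A_def B_def)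
  have "(1 + \<nu>) powr \<theta> * (1 - \<nu>) powr \<theta>' \<le> (1 + \<nu>) powr \<theta> * (1 + \<nu>) powr \<theta>'"
    using \<nu> \<theta> by (intro mult_left_mono powr_mono2) auto
  hence denominator: "(1 + \<nu>) powr \<theta> * (1 - \<nu>) powr \<theta>' \<le> 1 + \<nu>"
    using \<nu> \<theta>(3) by (simp add: powr_add[symmetric])
  have "L powr \<theta> * \<delta> powr \<theta>' * r powr (1 + \<nu>) / (1 + \<nu>)
      \<le> L powr \<theta> * \<delta> powr \<theta>' * r powr (1 + \<nu>) / ((1 + \<nu>) powr \<theta> * (1 - \<nu>) powr \<theta>')"
    using denominator \<nu> by (intro divide_left_mono) auto
  also have "\<dots> = A powr \<theta> * B powr \<theta>'"
  proof -
    have "(r^2) powr \<theta> = r powr (1 + \<nu>)"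
      using \<open>r > 0\<close> by (simp add: powr_powr \<theta>(4) flip: powr_numeral)
    thus ?thesis by (simp add: A_def B_def powr_mult powr_divide field_simps)
  qed
  also have "\<dots> \<le> \<theta> * A + \<theta>' * B"
    using Youngs_inequality_0 \<theta> \<open>A > 0\<close> \<open>B > 0\<close> by simp
  finally have "L powr \<theta> * \<delta> powr \<theta>' * r powr (1 + \<nu>) / (1 + \<nu>) \<le> \<theta> * A + \<theta>' * B" .
  moreover have "\<theta> * A = L / 2 * r^2" "\<theta>' * B = \<delta> / 2"
    using \<nu> by (simp_all add: \<theta>_def \<theta>'_def A_def B_def field_simps)
  ultimately show ?thesis unfolding \<theta>_def \<theta>'_def by simp
qed

text \<open>Nesterov's inexact-oracle lemma behind universal gradient methods.\<close>
lemma holder_power_le_quadratic: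
  fixes \<nu> M \<delta> L r :: real
  assumes \<nu>: "0 \<le> \<nu>" "\<nu> \<le> 1" and "M > 0" "\<delta> > 0" "r \<ge> 0"
    and L: "M powr (2 / (1 + \<nu>)) * \<delta> powr (- ((1 - \<nu>) / (1 + \<nu>))) \<le> L"
  shows "M / (1 + \<nu>) * r powr (1 + \<nu>) \<le> L / 2 * r^2 + \<delta> / 2"
proof -
  have M: "M \<le> L powr ((1 + \<nu>) / 2) * \<delta> powr ((1 - \<nu>) / 2)"
    using holder_constant_le_weighted_mean[OF \<nu>(1) assms(3,4) L] .
  have "0 < M powr (2 / (1 + \<nu>)) * \<delta> powr (- ((1 - \<nu>) / (1 + \<nu>)))"
    using assms(3,4) by simp
  hence "L > 0" using L by linarith
  consider "r = 0" | "\<nu> = 1" | "\<nu> < 1" "r > 0"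
    using assms(5) \<nu> by linarith
  thus ?thesis
  proof cases
    case 1
    thus ?thesis using \<open>\<delta> > 0\<close> by simp
  next
    case 2
    hence "M / (1 + \<nu>) * r powr (1 + \<nu>) = M / 2 * r^2"
      using assms(5) by (cases "r = 0") (simp_all add: powr_realpow)
    also have "\<dots> \<le> L / 2 * r^2"
      using M 2 \<open>L > 0\<close> \<open>\<delta> > 0\<close> by (intro mult_right_mono) auto
    finally show ?thesis using \<open>\<delta> > 0\<close> by linarith
  next
    case 3
    have "M / (1 + \<nu>) * r powr (1 + \<nu>)
        \<le> L powr ((1 + \<nu>) / 2) * \<delta> powr ((1 - \<nu>) / 2) * r powr (1 + \<nu>) / (1 + \<nu>)"
      using M \<nu> by (simp add: divide_right_mono mult_right_mono)
    also have "\<dots> \<le> L / 2 * r^2 + \<delta> / 2"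
      using young_holder_term[OF \<nu>(1) 3(1) \<open>L > 0\<close> \<open>\<delta> > 0\<close> 3(2)] .
    finally show ?thesis .
  qed
qed

section \<open>The ACGM subroutine\<close>

lemma acgm_phi_segment:
  "acgm_phi g u \<beta> ((1 - a) *\<^sub>R p + a *\<^sub>R v) = acgm_phi g u \<beta> p
     - a * inner (acgm_grad g u \<beta> p) (p - v) + a^2 * \<beta> / 2 * (norm (v - p))^2"
proof -
  have "(1 - a) *\<^sub>R p + a *\<^sub>R v - u = (p - u) + a *\<^sub>R (v - p)"
    by (simp add: algebra_simps)
  hence norm_eq: "(norm ((1 - a) *\<^sub>R p + a *\<^sub>R v - u))^2
      = (norm (p - u))^2 + 2 * a * inner (p - u) (v - p) + a^2 * (norm (v - p))^2"
    by (simp only: power2_norm_eq_inner)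
       (simp add: inner_commute power2_eq_square algebra_simps)
  have inner_eq: "inner g ((1 - a) *\<^sub>R p + a *\<^sub>R v) = inner g p + a * inner g (v - p)"
    by (simp add: algebra_simps)
  show ?thesis
    unfolding acgm_phi_def acgm_grad_def norm_eq inner_eq
    by (simp add: inner_commute algebra_simps)
qed

lemma acgm_phi_above_linearization:
  assumes "\<beta> \<ge> 0"
  shows "acgm_phi g u \<beta> p + inner (acgm_grad g u \<beta> p) (x - p) \<le> acgm_phi g u \<beta> x"
  using acgm_phi_segment[of g u \<beta> 1 p x] assms by (simp add: inner_diff_right)

lemma acgm_steps_iterate_in:
  assumes "convex X" "u \<in> X" "acgm_steps X \<sigma> D g u \<beta> \<eta> us vs t"
  shows "j = 0 \<or> j < t \<Longrightarrow> us j \<in> X"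
proof (induction j)
  case 0
  thus ?case using assms(2,3) by (simp add: acgm_steps_def)
next
  case (Suc j)
  hence "Suc j \<in> {1..<t}" by simp
  then obtain \<alpha> where "\<alpha> \<in> {0..1}" "us (Suc j) = (1 - \<alpha>) *\<^sub>R us j + \<alpha> *\<^sub>R vs (Suc j)"
    and "vs (Suc j) \<in> X"
    using assms(3) unfolding acgm_steps_def by fastforce
  thus ?case using Suc convexD_alt[OF assms(1)] by auto
qed

lemma acgm_run_output:
  assumes "convex X" "u \<in> X" "acgm_run X \<sigma> D g u \<beta> \<eta> T out"
  shows "out \<in> X" and "\<forall>w\<in>X. inner (acgm_grad g u \<beta> out) (out - w) \<le> \<eta>"
proof -
  obtain us vs where steps: "acgm_steps X \<sigma> D g u \<beta> \<eta> us vs T" and "1 \<le> T"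
    and stop: "inner (acgm_grad g u \<beta> (us (T-1))) (us (T-1) - vs T) \<le> \<eta> - acgm_delta \<sigma> \<beta> D T"
    and out: "out = us (T - 1)"
    using assms(3) unfolding acgm_run_def by blast
  show "out \<in> X"
    using acgm_steps_iterate_in[OF assms(1,2) steps, of "T - 1"] \<open>1 \<le> T\<close> out by simp
  show "\<forall>w\<in>X. inner (acgm_grad g u \<beta> out) (out - w) \<le> \<eta>"
  proof
    fix w assume "w \<in> X"
    hence "inner (acgm_grad g u \<beta> out) (vs T - w) \<le> acgm_delta \<sigma> \<beta> D T"
      using steps \<open>1 \<le> T\<close> out unfolding acgm_steps_def by auto
    thus "inner (acgm_grad g u \<beta> out) (out - w) \<le> \<eta>"
      using stop unfolding out by (simp add: inner_diff_right)
  qed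
qed

lemma acgm_rate_recursion_step:
  fixes J Q \<sigma> :: real
  assumes "J \<ge> 1" "Q \<ge> 0" "\<sigma> \<ge> 0"
  shows "(1 - 2 / (J + 1)) * (2 * (1 + \<sigma>) * Q / J) + 2 / (J + 1) * (\<sigma> * Q / J)
          + (2 / (J + 1))^2 * Q / 2 \<le> 2 * (1 + \<sigma>) * Q / (J + 1)"
proof -
  obtain s where s: "J + 1 = s" "s > 0" using assms(1) by simp
  have "(1 - 2 / s) * (2 * (1 + \<sigma>) * Q / J) + 2 / s * (\<sigma> * Q / J) + (2 / s)^2 * Q / 2
     = (2 * (1 + \<sigma>) * Q * (s - 2) * s + 2 * \<sigma> * Q * s + 2 * Q * J) / (J * s^2)"
    using assms s by (simp add: field_simps power2_eq_square)
  also have "\<dots> \<le> 2 * (1 + \<sigma>) * Q * J * s / (J * s^2)"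
    using assms s by (intro divide_right_mono) (auto simp: algebra_simps)
  also have "\<dots> = 2 * (1 + \<sigma>) * Q / s"
    using assms s by (simp add: field_simps power2_eq_square)
  finally show ?thesis unfolding s(1) .
qed

locale acgm_execution =
  fixes X :: "'a::real_inner set" and \<sigma> \<beta> :: real and g u :: 'a and K t :: nat
    and us vs :: "nat \<Rightarrow> 'a"
  assumes X: "bounded X" "convex X" "diameter X > 0" and u: "u \<in> X"
    and \<beta>: "\<beta> > 0" and \<sigma>: "\<sigma> \<ge> 0" and K: "K \<ge> 1"
    and steps: "acgm_steps X \<sigma> (diameter X) g u \<beta> (\<beta> * (diameter X)^2 / real K) us vs t"
begin

abbreviation "\<phi> \<equiv> acgm_phi g u \<beta>"
abbreviation "Q \<equiv> \<beta> * (diameter X)^2"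
abbreviation "gap j \<equiv> inner (acgm_grad g u \<beta> (us (j - 1))) (us (j - 1) - vs j)"

lemma Q_pos: "Q > 0"
  using \<beta> X(3) by simp

lemma vs_in: "j \<in> {1..t} \<Longrightarrow> vs j \<in> X"
  using steps unfolding acgm_steps_def by blast

lemma descent_step:
  assumes "j \<in> {1..<t}" "a \<in> {0..1}"
  shows "\<phi> (us j) \<le> \<phi> (us (j - 1)) - a * gap j + a^2 * Q / 2"
proof -
  obtain \<alpha> where line_search: "\<forall>a\<in>{0..1}. \<phi> ((1-\<alpha>) *\<^sub>R us (j-1) + \<alpha> *\<^sub>R vs j)
                         \<le> \<phi> ((1-a) *\<^sub>R us (j-1) + a *\<^sub>R vs j)"
      and "us j = (1-\<alpha>) *\<^sub>R us (j-1) + \<alpha> *\<^sub>R vs j"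
    using steps assms(1) unfolding acgm_steps_def by blast
  hence "\<phi> (us j) \<le> \<phi> ((1-a) *\<^sub>R us (j-1) + a *\<^sub>R vs j)"
    using assms(2) by simp
  also have "\<dots> = \<phi> (us (j-1)) - a * gap j + a^2 * \<beta> / 2 * (norm (vs j - us (j-1)))^2"
    by (rule acgm_phi_segment)
  also have "\<dots> \<le> \<phi> (us (j-1)) - a * gap j + a^2 * \<beta> / 2 * (diameter X)^2"
  proof -
    have "j - 1 < t" using assms(1) by auto
    hence "us (j - 1) \<in> X" "vs j \<in> X"
      using acgm_steps_iterate_in[OF X(2) u steps, of "j - 1"] vs_in assms(1) by auto
    hence "norm (vs j - us (j-1)) \<le> diameter X"
      using diameter_bounded_bound[OF X(1)] by (simp add: dist_norm)
    thus ?thesis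
      using \<beta> by (intro add_left_mono mult_left_mono power_mono) auto
  qed
  finally show ?thesis by simp
qed

lemma gap_bound:
  assumes "j \<in> {1..t}" "x \<in> X"
  shows "\<phi> (us (j - 1)) - \<phi> x \<le> gap j + \<sigma> * Q / real j"
proof -
  have "\<phi> (us (j-1)) + inner (acgm_grad g u \<beta> (us (j-1))) (x - us (j-1)) \<le> \<phi> x"
    using \<beta> by (intro acgm_phi_above_linearization) simp
  moreover have "inner (acgm_grad g u \<beta> (us (j-1))) (vs j - x) \<le> \<sigma> * Q / real j"
    using steps assms unfolding acgm_steps_def acgm_delta_def by (auto simp: mult.assoc)
  ultimately show ?thesis by (simp add: inner_diff_right)
qed

lemma rate:
  assumes "x \<in> X"
  shows "1 \<le> j \<Longrightarrow> j < t \<Longrightarrow> \<phi> (us j) - \<phi> x \<le> 2 * (1 + \<sigma>) * Q / (real j + 1)"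
proof (induction j rule: dec_induct)
  case base
  have "\<phi> (us 1) \<le> \<phi> (us 0) - gap 1 + Q / 2"
    using descent_step[of 1 1] base by simp
  moreover have "\<phi> (us 0) - \<phi> x \<le> gap 1 + \<sigma> * Q"
    using gap_bound[of 1 x] assms base by simp
  ultimately show ?case using Q_pos by (simp add: algebra_simps)
next
  case (step i)
  define J where "J = real (Suc i)"
  define a where "a = 2 / (J + 1)"
  have J: "J \<ge> 1" and a: "a \<in> {0..1}" using step(1) by (auto simp: J_def a_def)
  have "\<phi> (us (Suc i)) - \<phi> x \<le> (1 - a) * (\<phi> (us i) - \<phi> x) + a * (\<sigma> * Q / J) + a^2 * Q / 2"
  proof -
    have "a * (\<phi> (us i) - \<phi> x) \<le> a * (gap (Suc i) + \<sigma> * Q / J)"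
      using gap_bound[of "Suc i" x] assms step a by (intro mult_left_mono) (auto simp: J_def)
    thus ?thesis
      using descent_step[of "Suc i" a] step a by (simp add: algebra_simps)
  qed
  also have "\<dots> \<le> (1 - a) * (2 * (1 + \<sigma>) * Q / J) + a * (\<sigma> * Q / J) + a^2 * Q / 2"
    using step a by (intro add_mono mult_left_mono) (auto simp: J_def add.commute)
  also have "\<dots> \<le> 2 * (1 + \<sigma>) * Q / (J + 1)"
    unfolding a_def using acgm_rate_recursion_step[OF J _ \<sigma>] Q_pos by simp
  finally show ?case by (simp add: J_def)
qed

lemma late_gap_lower_bound:
  assumes "j \<in> {1..<t}" "(2 * \<sigma> + 2) * real K < real j"
  shows "Q * ((\<sigma> + 2) / ((2 * \<sigma> + 2) * real K)) \<le> gap j"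
proof -
  have "Q * ((\<sigma> + 2) / ((2 * \<sigma> + 2) * real K)) = ((2 * \<sigma> + 2) * Q - \<sigma> * Q) / ((2 * \<sigma> + 2) * real K)"
    by (simp add: algebra_simps)
  also have "\<dots> = Q / real K - \<sigma> * Q / ((2 * \<sigma> + 2) * real K)"
    using \<sigma> by (simp add: diff_divide_distrib)
  also have "\<dots> \<le> Q / real K - \<sigma> * Q / real j"
    using assms Q_pos \<sigma> K by (intro diff_left_mono divide_left_mono mult_pos_pos) auto
  also have "\<dots> < gap j"
    using steps assms(1) unfolding acgm_steps_def acgm_delta_def by (auto simp: mult.assoc)
  finally show ?thesis by simp
qed

lemma late_decrease:
  assumes b: "b \<in> {0..1}" and gap: "\<And>j. j \<in> {1..<t} \<Longrightarrow> j0 < j \<Longrightarrow> Q * b \<le> gap j"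
  shows "j0 + n < t \<Longrightarrow> \<phi> (us (j0 + n)) \<le> \<phi> (us j0) - real n * (b^2 * Q / 2)"
proof (induction n)
  case 0
  show ?case by simp
next
  case (Suc n)
  have j: "Suc (j0 + n) \<in> {1..<t}" using Suc.prems by auto
  have "\<phi> (us (Suc (j0 + n))) \<le> \<phi> (us (j0 + n)) - b * gap (Suc (j0 + n)) + b^2 * Q / 2"
    using descent_step[OF j b] by simp
  moreover have "b * (Q * b) \<le> b * gap (Suc (j0 + n))"
    using gap[OF j] b by (intro mult_left_mono) auto
  moreover have "b * (Q * b) = b^2 * Q"
    by (simp add: power2_eq_square)
  moreover have "real (Suc n) * (b^2 * Q / 2) = real n * (b^2 * Q / 2) + b^2 * Q / 2"
    by (simp add: algebra_simps)
  moreover have "\<phi> (us (j0 + n)) \<le> \<phi> (us j0) - real n * (b^2 * Q / 2)"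
    using Suc by simp
  ultimately show ?case
    unfolding add_Suc_right by linarith
qed

text \<open>Beyond step \<open>(2\<sigma> + 2)K\<close> the oracle error \<open>\<sigma>Q/j\<close> is small against \<open>\<eta>\<close>, so each
  failed stopping test gives a Wolfe gap of at least \<open>bQ\<close>, \<open>b = (\<sigma> + 2)/((2\<sigma> + 2)K)\<close>, and the
  line search gains \<open>b\<^sup>2Q/2\<close>; the \<open>O(1/j)\<close> rate caps the total gain.\<close>
lemma late_phase_length:
  assumes j0: "(2 * \<sigma> + 2) * real K < real j0 + 1" "1 \<le> j0" and t: "j0 + m < t"
  shows "real m \<le> (5 * \<sigma> + 4) * real K"
proof -
  define P where "P = (2 * \<sigma> + 2) * real K"
  define b where "b = (\<sigma> + 2) / P"
  have "2 * \<sigma> + 2 \<le> P" using K \<sigma> by (simp add: P_def)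
  hence P: "P \<ge> \<sigma> + 2" "P \<ge> 2" using \<sigma> by linarith+
  have b: "b \<in> {0..1}"
    unfolding b_def using P \<sigma> by (auto simp: divide_le_eq intro: divide_nonneg_nonneg)
  have "Q * b \<le> gap j" if "j \<in> {1..<t}" "j0 < j" for j
    using late_gap_lower_bound[OF that(1)] j0 that(2) unfolding b_def P_def by simp
  hence "\<phi> (us (j0 + m)) \<le> \<phi> (us j0) - real m * (b^2 * Q / 2)"
    using late_decrease[OF b _ t] by simp
  moreover have "\<phi> (us j0) - \<phi> (us (j0 + m)) \<le> 2 * (1 + \<sigma>) * Q / (real j0 + 1)"
    using rate acgm_steps_iterate_in[OF X(2) u steps, of "j0 + m"] j0 t by auto
  moreover have "2 * (1 + \<sigma>) * Q / (real j0 + 1) \<le> 2 * (1 + \<sigma>) * Q / P"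
    using j0 P Q_pos \<sigma> unfolding P_def by (intro divide_left_mono) auto
  ultimately have "real m * (b^2 * Q / 2) \<le> 2 * (1 + \<sigma>) * Q / P"
    by linarith
  hence "P * (Q * (real m * (\<sigma> + 2)^2)) \<le> P * (Q * (4 * (1 + \<sigma>) * P))"
    using P unfolding b_def by (simp add: field_simps power2_eq_square)
  hence "real m * (\<sigma> + 2)^2 \<le> 4 * (1 + \<sigma>) * P"
    using Q_pos P by (simp add: mult_le_cancel_left_pos)
  also have "\<dots> = 8 * (1 + \<sigma>)^2 * real K"
    by (simp add: P_def power2_eq_square algebra_simps)
  also have "\<dots> \<le> (5 * \<sigma> + 4) * real K * (\<sigma> + 2)^2"
  proof -
    have "8 * (1 + \<sigma>)^2 \<le> (5 * \<sigma> + 4) * (\<sigma> + 2)^2"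
      using \<sigma> by (simp add: power2_eq_square algebra_simps)
    from mult_right_mono[OF this, of "real K"] show ?thesis by (simp add: mult_ac)
  qed
  finally show ?thesis using \<sigma> by simp
qed

lemma steps_count: "real t \<le> (7 * \<sigma> + 6) * real K + 1"
proof -
  define P where "P = (2 * \<sigma> + 2) * real K"
  define j0 where "j0 = nat \<lfloor>P\<rfloor>"
  have "2 \<le> P" using K \<sigma> mult_mono[of 2 "2 * \<sigma> + 2" 1 "real K"] by (simp add: P_def)
  hence j0: "real j0 \<le> P" "P < real j0 + 1" "1 \<le> j0"
    unfolding j0_def by (auto simp: le_nat_iff)
  show ?thesis
  proof (cases "t \<le> j0 + 1")
    case True
    hence "real t \<le> P + 1" using j0 by linarith
    also have "\<dots> \<le> (7 * \<sigma> + 6) * real K + 1"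
      unfolding P_def using \<sigma> by (intro add_right_mono mult_right_mono) auto
    finally show ?thesis .
  next
    case False
    define m where "m = t - 1 - j0"
    have "t = m + j0 + 1" "j0 + m < t" using False by (auto simp: m_def)
    thus ?thesis
      using late_phase_length[of j0 m] j0 unfolding P_def by (simp add: algebra_simps)
  qed
qed

end

lemma acgm_steps_count:
  fixes X :: "'a::real_inner set"
  assumes "bounded X" "convex X" "diameter X > 0" "u \<in> X" "\<beta> > 0" "\<sigma> \<ge> 0" "K \<ge> 1"
    and "acgm_steps X \<sigma> (diameter X) g u \<beta> (\<beta> * (diameter X)^2 / real K) us vs t"
  shows "real t \<le> (7 * \<sigma> + 6) * real K + 1"
  using acgm_execution.steps_count acgm_execution.intro assms by blast

section \<open>One outer iteration of UCGS\<close>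

lemma inner_three_point:
  fixes a b c :: "'a::real_inner"
  shows "2 * inner (a - b) (a - c) = (norm (a - b))^2 + (norm (a - c))^2 - (norm (b - c))^2"
proof -
  have "b - c = (a - c) - (a - b)" by simp
  hence "(norm (b - c))^2 = (norm (a - c))^2 - 2 * inner (a - b) (a - c) + (norm (a - b))^2"
    by (simp only: power2_norm_eq_inner) (simp add: inner_diff_left inner_diff_right inner_commute)
  thus ?thesis by simp
qed

lemma ucgs_step_inequality:
  fixes f :: "'a::real_inner \<Rightarrow> real"
  assumes "convex X" "convex_on X f"
    and gradient: "\<forall>x\<in>X. (f has_derivative (\<lambda>h. inner (G x) h)) (at x)"
    and "xp \<in> X" "yp \<in> X" "0 < \<gamma>" "\<gamma> \<le> 1"
    and z: "z = (1 - \<gamma>) *\<^sub>R yp + \<gamma> *\<^sub>R xp" and yk: "yk = (1 - \<gamma>) *\<^sub>R yp + \<gamma> *\<^sub>R xk"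
    and optimality: "inner (acgm_grad (G z) xp (Lt * \<gamma>) xk) (xk - w) \<le> \<eta>"
    and accept: "ucgs_accept f G \<epsilon> Lt \<gamma> z yk"
  shows "f yk \<le> (1 - \<gamma>) * f yp + \<gamma> * (f z + inner (G z) (w - z))
          + Lt * \<gamma>^2 / 2 * ((norm (w - xp))^2 - (norm (w - xk))^2) + \<gamma> * \<eta> + \<epsilon> / 2 * \<gamma>"
proof -
  have "z \<in> X" using convexD_alt[OF assms(1,5,4), of \<gamma>] assms(6,7) z by simp
  hence tangent: "f z + inner (G z) (yp - z) \<le> f yp"
    using convex_on_gradient_inequality[OF assms(2)] gradient assms(5) by blast
  have "yk - z = (1 - \<gamma>) *\<^sub>R (yp - z) + \<gamma> *\<^sub>R (w - z) + \<gamma> *\<^sub>R (xk - w)"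
    by (simp add: yk algebra_simps)
  hence model: "inner (G z) (yk - z)
      = (1 - \<gamma>) * inner (G z) (yp - z) + \<gamma> * inner (G z) (w - z) + \<gamma> * inner (G z) (xk - w)"
    by (simp add: inner_add_right)
  have "yk - z = \<gamma> *\<^sub>R (xk - xp)"
    by (simp add: yk z algebra_simps)
  hence dist: "(norm (yk - z))^2 = \<gamma>^2 * (norm (xk - xp))^2"
    by (simp add: power_mult_distrib)
  have optimality': "inner (G z) (xk - w) \<le> \<eta> - Lt * \<gamma> * inner (xk - xp) (xk - w)"
    using optimality by (simp add: acgm_grad_def inner_add_left)
  have three: "inner (xk - xp) (xk - w)
      = ((norm (xk - xp))^2 + (norm (w - xk))^2 - (norm (w - xp))^2) / 2"
    using inner_three_point[of xk xp w] by (simp add: norm_minus_commute)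
  have "f yk \<le> f z + inner (G z) (yk - z) + Lt / 2 * (norm (yk - z))^2 + \<epsilon> / 2 * \<gamma>"
    using accept unfolding ucgs_accept_def .
  also have "\<dots> = (1 - \<gamma>) * (f z + inner (G z) (yp - z)) + \<gamma> * (f z + inner (G z) (w - z))
      + \<gamma> * inner (G z) (xk - w) + Lt * \<gamma>^2 / 2 * (norm (xk - xp))^2 + \<epsilon> / 2 * \<gamma>"
    unfolding model dist by (simp add: algebra_simps)
  also have "\<dots> \<le> (1 - \<gamma>) * f yp + \<gamma> * (f z + inner (G z) (w - z))
      + \<gamma> * (\<eta> - Lt * \<gamma> * inner (xk - xp) (xk - w)) + Lt * \<gamma>^2 / 2 * (norm (xk - xp))^2
      + \<epsilon> / 2 * \<gamma>"
    using tangent optimality' assms(6,7) by (intro add_mono mult_left_mono order_refl) auto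
  also have "\<dots> = (1 - \<gamma>) * f yp + \<gamma> * (f z + inner (G z) (w - z))
      + Lt * \<gamma>^2 / 2 * ((norm (w - xp))^2 - (norm (w - xk))^2) + \<gamma> * \<eta> + \<epsilon> / 2 * \<gamma>"
    unfolding three
    by (simp add: algebra_simps diff_divide_distrib add_divide_distrib power2_eq_square)
  finally show ?thesis .
qed

lemma ucgs_ell_1:
  assumes "ucgs_Gamma L \<gamma> 1 \<noteq> 0" "\<gamma> 1 = 1"
  shows "ucgs_ell f G L \<gamma> z 1 w = f (z 1) + inner (G (z 1)) (w - z 1)"
  using assms unfolding ucgs_ell_def by simp

lemma ucgs_ell_recursion:
  assumes "k \<ge> 2" "ucgs_Gamma L \<gamma> k \<noteq> 0"
    and "ucgs_Gamma L \<gamma> k = (1 - \<gamma> k) * ucgs_Gamma L \<gamma> (k - 1)"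
  shows "ucgs_ell f G L \<gamma> z k w = (1 - \<gamma> k) * ucgs_ell f G L \<gamma> z (k - 1) w
           + \<gamma> k * (f (z k) + inner (G (z k)) (w - z k))"
proof -
  obtain j where "k = Suc j" "j \<ge> 1" using assms(1) by (cases k) auto
  thus ?thesis
    using assms(2,3) unfolding ucgs_ell_def by (simp add: distrib_left)
qed

lemma ucgs_gamma_ok_antimono:
  assumes ok: "ucgs_gamma_ok k Gp L \<gamma>" and ok': "ucgs_gamma_ok k Gp L' \<gamma>'"
    and "L' \<le> L" "k \<ge> 1" and Gp: "k \<noteq> 1 \<Longrightarrow> Gp \<ge> 0"
  shows "\<gamma> \<le> \<gamma>'"
proof (cases "k = 1")
  case True
  thus ?thesis using ok ok' unfolding ucgs_gamma_ok_def by simp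
next
  case False
  have eq: "L * \<gamma>^2 / real k = Gp * (1 - \<gamma>)" "L' * \<gamma>'^2 / real k = Gp * (1 - \<gamma>')"
    and pos: "0 < L'" "0 < \<gamma>'"
    using ok ok' False unfolding ucgs_gamma_ok_def by auto
  show ?thesis
  proof (rule ccontr)
    assume "\<not> \<gamma> \<le> \<gamma>'"
    hence "L' * \<gamma>'^2 < L * \<gamma>^2"
      using pos \<open>L' \<le> L\<close> by (intro mult_le_less_imp_less power_strict_mono) auto
    hence "Gp * (1 - \<gamma>') < Gp * (1 - \<gamma>)"
      using eq \<open>k \<ge> 1\<close>
      by (metis divide_strict_right_mono of_nat_0_less_iff less_le_trans zero_less_one)
    moreover have "Gp * (1 - \<gamma>) \<le> Gp * (1 - \<gamma>')"
      using Gp[OF False] \<open>\<not> \<gamma> \<le> \<gamma>'\<close> by (intro mult_left_mono) auto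
    ultimately show False by simp
  qed
qed

lemma ucgs_rejected_trial_bound:
  fixes f :: "'a::real_inner \<Rightarrow> real"
  assumes "convex X"
    and gradient: "\<forall>x\<in>X. (f has_derivative (\<lambda>h. inner (G x) h)) (at x)"
    and \<nu>: "0 \<le> \<nu>" "\<nu> \<le> 1" and "M > 0"
    and holder: "\<forall>x\<in>X. \<forall>y\<in>X. norm (G x - G y) \<le> M * norm (x - y) powr \<nu>"
    and "\<epsilon> > 0" and "xp \<in> X" "yp \<in> X"
    and trial: "ucgs_trial G X \<sigma> D k Gp xp yp Lt \<gamma> z xk yk T"
    and rejected: "\<not> ucgs_accept f G \<epsilon> Lt \<gamma> z yk"
  shows "Lt < M powr (2 / (1 + \<nu>)) * (\<epsilon> * \<gamma>) powr (- ((1 - \<nu>) / (1 + \<nu>)))"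
proof (rule ccontr)
  assume "\<not> ?thesis"
  hence Lt: "M powr (2 / (1 + \<nu>)) * (\<epsilon> * \<gamma>) powr (- ((1 - \<nu>) / (1 + \<nu>))) \<le> Lt"
    by simp
  have \<gamma>: "0 < \<gamma>" "\<gamma> \<le> 1" and z: "z = (1 - \<gamma>) *\<^sub>R yp + \<gamma> *\<^sub>R xp"
    and run: "acgm_run X \<sigma> D (G z) xp (Lt * \<gamma>) (Lt * \<gamma> * D^2 / real k) T xk"
    and yk: "yk = (1 - \<gamma>) *\<^sub>R yp + \<gamma> *\<^sub>R xk"
    using trial unfolding ucgs_trial_def ucgs_gamma_ok_def by auto
  have "xk \<in> X" using acgm_run_output(1)[OF \<open>convex X\<close> \<open>xp \<in> X\<close> run] .
  hence "z \<in> X" "yk \<in> X"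
    using convexD_alt[OF \<open>convex X\<close>] \<open>xp \<in> X\<close> \<open>yp \<in> X\<close> \<gamma> z yk by auto
  hence "f yk \<le> f z + inner (G z) (yk - z) + M / (1 + \<nu>) * norm (yk - z) powr (1 + \<nu>)"
    using holder_gradient_upper_bound[OF \<open>convex X\<close> gradient \<nu>(1) holder] by blast
  also have "M / (1 + \<nu>) * norm (yk - z) powr (1 + \<nu>) \<le> Lt / 2 * (norm (yk - z))^2 + \<epsilon> * \<gamma> / 2"
    using holder_power_le_quadratic[OF \<nu> \<open>M > 0\<close> _ _ Lt] \<open>\<epsilon> > 0\<close> \<gamma> by simp
  finally show False
    using rejected unfolding ucgs_accept_def by (simp add: algebra_simps)
qed

lemma ucgs_backtracking_bound:
  fixes f :: "'a::real_inner \<Rightarrow> real"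
  assumes "convex X"
    and gradient: "\<forall>x\<in>X. (f has_derivative (\<lambda>h. inner (G x) h)) (at x)"
    and \<nu>: "0 \<le> \<nu>" "\<nu> \<le> 1" and "M > 0"
    and holder: "\<forall>x\<in>X. \<forall>y\<in>X. norm (G x - G y) \<le> M * norm (x - y) powr \<nu>"
    and "\<epsilon> > 0" and "xp \<in> X" "yp \<in> X" and "k \<ge> 1" and Gp: "k \<noteq> 1 \<Longrightarrow> Gp \<ge> 0"
    and accepted: "ucgs_gamma_ok k Gp L \<gamma>"
    and trial: "ucgs_trial G X \<sigma> D k Gp xp yp (L / 2) \<gamma>' z' x' y' T'"
    and rejected: "\<not> ucgs_accept f G \<epsilon> (L / 2) \<gamma>' z' y'"
  shows "L < 2 * M powr (2 / (1 + \<nu>)) * \<epsilon> powr (- ((1 - \<nu>) / (1 + \<nu>)))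
           * \<gamma> powr (- ((1 - \<nu>) / (1 + \<nu>)))"
proof -
  define p where "p = (1 - \<nu>) / (1 + \<nu>)"
  have ok': "ucgs_gamma_ok k Gp (L / 2) \<gamma>'" using trial unfolding ucgs_trial_def by simp
  hence "\<gamma> \<le> \<gamma>'" "0 < \<gamma>" "L > 0"
    using ucgs_gamma_ok_antimono[OF accepted ok' _ \<open>k \<ge> 1\<close> Gp] accepted
    unfolding ucgs_gamma_ok_def by auto
  have "L / 2 < M powr (2 / (1 + \<nu>)) * (\<epsilon> * \<gamma>') powr (- p)"
    using ucgs_rejected_trial_bound[OF assms(1-9) trial rejected] by (simp add: p_def)
  also have "\<dots> \<le> M powr (2 / (1 + \<nu>)) * (\<epsilon> * \<gamma>) powr (- p)"
    using \<open>\<gamma> \<le> \<gamma>'\<close> \<open>0 < \<gamma>\<close> \<open>\<epsilon> > 0\<close> \<nu> unfolding p_def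
    by (intro mult_left_mono powr_mono2') (auto intro: divide_nonneg_pos)
  finally show ?thesis by (simp add: p_def powr_mult mult.assoc)
qed

section \<open>Counting outer iterations\<close>

lemma sum_step_div_sqrt_le:
  fixes \<Gamma> \<gamma> :: "nat \<Rightarrow> real"
  assumes "\<gamma> 1 = 1" and pos: "\<forall>k\<in>{1..K}. 0 < \<Gamma> k \<and> 0 < \<gamma> k \<and> \<gamma> k \<le> 1"
    and rec: "\<forall>k\<in>{2..K}. \<Gamma> k = (1 - \<gamma> k) * \<Gamma> (k - 1)"
  shows "1 \<le> j \<Longrightarrow> j \<le> K \<Longrightarrow> (\<Sum>k=1..j. \<gamma> k / sqrt (\<Gamma> k)) \<le> 2 / sqrt (\<Gamma> j)"
proof (induction j rule: dec_induct)
  case base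
  hence "\<Gamma> 1 > 0" using pos by simp
  thus ?case using assms(1) by (simp add: frac_le)
next
  case (step n)
  let ?g = "\<gamma> (Suc n)"
  have "\<Gamma> n > 0" "\<Gamma> (Suc n) > 0" "0 < ?g" "?g \<le> 1" using pos step by auto
  have "\<Gamma> (Suc n) = (1 - ?g) * \<Gamma> n" using rec step by auto
  hence "sqrt (\<Gamma> n) * sqrt (1 - ?g) = sqrt (\<Gamma> (Suc n))" by (simp add: real_sqrt_mult)
  hence "2 / sqrt (\<Gamma> n) = 2 * sqrt (1 - ?g) / sqrt (\<Gamma> (Suc n))"
    using \<open>\<Gamma> n > 0\<close> \<open>\<Gamma> (Suc n) > 0\<close> by (simp add: field_simps)
  also have "\<dots> \<le> (2 - ?g) / sqrt (\<Gamma> (Suc n))"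
  proof -
    have "sqrt (1 - ?g) \<le> 1 - ?g / 2"
      using \<open>0 < ?g\<close> \<open>?g \<le> 1\<close> by (intro real_le_lsqrt) (auto simp: power2_eq_square algebra_simps)
    thus ?thesis using \<open>\<Gamma> (Suc n) > 0\<close> by (intro divide_right_mono) auto
  qed
  finally have "2 / sqrt (\<Gamma> n) + ?g / sqrt (\<Gamma> (Suc n)) \<le> 2 / sqrt (\<Gamma> (Suc n))"
    by (simp add: diff_divide_distrib)
  thus ?case using step by simp
qed

lemma sum_real_powr_ge:
  assumes "0 \<le> q" "q \<le> 1"
  shows "real K powr (q + 1) / 2 \<le> (\<Sum>k=1..K. real k powr q)"
proof -
  have "real K powr (q + 1) / 2 = real K ^ 2 / 2 * real K powr (q - 1)"
  proof (cases "K = 0")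
    case False
    have "real K powr (q + 1) = real K powr 2 * real K powr (q - 1)"
      by (simp only: powr_add[symmetric]) (simp add: add.commute)
    thus ?thesis using False by (simp add: powr_realpow)
  qed simp
  also have "\<dots> \<le> (\<Sum>k=1..K. real k) * real K powr (q - 1)"
  proof (intro mult_right_mono)
    show "real K ^ 2 / 2 \<le> (\<Sum>k=1..K. real k)"
    proof (induction K)
      case (Suc K)
      thus ?case by (simp add: power2_eq_square algebra_simps)
    qed simp
  qed simp
  also have "\<dots> \<le> (\<Sum>k=1..K. real k powr q)"
    unfolding sum_distrib_right
  proof (intro sum_mono)
    fix k assume "k \<in> {1..K}"
    hence "real K powr (q - 1) \<le> real k powr (q - 1)"
      using assms by (intro powr_mono2') auto
    thus "real k * real K powr (q - 1) \<le> real k powr q"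
      using \<open>k \<in> {1..K}\<close> by (simp add: powr_diff field_simps)
  qed
  finally show ?thesis .
qed

lemma factor_recursion_antimono:
  fixes \<Gamma> \<gamma> :: "nat \<Rightarrow> real"
  assumes pos: "\<forall>k\<in>{1..K}. 0 < \<Gamma> k \<and> 0 < \<gamma> k \<and> \<gamma> k \<le> 1"
    and rec: "\<forall>k\<in>{2..K}. \<Gamma> k = (1 - \<gamma> k) * \<Gamma> (k - 1)"
  shows "j \<le> n \<Longrightarrow> 1 \<le> j \<Longrightarrow> n \<le> K \<Longrightarrow> \<Gamma> n \<le> \<Gamma> j"
proof (induction n rule: dec_induct)
  case (step m)
  hence "m \<in> {1..K}" "Suc m \<in> {1..K}" "Suc m \<in> {2..K}" by auto
  hence "0 < \<Gamma> m" "0 < \<gamma> (Suc m)" "\<gamma> (Suc m) \<le> 1" using pos by blast+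
  have "\<Gamma> (Suc m) = (1 - \<gamma> (Suc m)) * \<Gamma> m" using rec \<open>Suc m \<in> {2..K}\<close> by auto
  also have "\<dots> \<le> \<Gamma> m"
    using \<open>0 < \<Gamma> m\<close> \<open>0 < \<gamma> (Suc m)\<close> \<open>\<gamma> (Suc m) \<le> 1\<close> by (intro mult_left_le_one_le) auto
  finally show ?case using step by simp
qed simp

lemma step_div_sqrt_lower_bound:
  fixes g \<Gamma> \<Gamma>\<^sub>K C p k :: real
  assumes "0 < g" "0 < \<Gamma>\<^sub>K" "\<Gamma>\<^sub>K \<le> \<Gamma>" "C > 0" "0 \<le> p" "p \<le> 1" "0 < k"
    and growth: "k * \<Gamma> < C * g powr (2 - p)"
  shows "k powr (1 / (2 - p)) * \<Gamma>\<^sub>K powr (1 / (2 - p) - 1/2) / C powr (1 / (2 - p)) \<le> g / sqrt \<Gamma>"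
proof -
  define q where "q = 1 / (2 - p)"
  have q: "0 < q" "1/2 \<le> q" "(2 - p) * q = 1"
    using assms(5,6) by (auto simp: q_def field_simps)
  have "(k * \<Gamma> / C) powr q < (g powr (2 - p)) powr q"
    using growth assms q by (intro powr_less_mono2) (auto simp: field_simps)
  hence "k powr q * \<Gamma> powr q / C powr q < g"
    using assms q by (simp add: powr_powr powr_mult powr_divide)
  have "k powr q * \<Gamma>\<^sub>K powr (q - 1/2) / C powr q \<le> k powr q * \<Gamma> powr (q - 1/2) / C powr q"
    using assms q by (intro divide_right_mono mult_left_mono powr_mono2) auto
  also have "\<dots> = k powr q * \<Gamma> powr q / C powr q / sqrt \<Gamma>"
    using assms by (simp add: powr_diff powr_half_sqrt[symmetric])
  also have "\<dots> \<le> g / sqrt \<Gamma>"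
    using \<open>k powr q * \<Gamma> powr q / C powr q < g\<close> assms by (intro divide_right_mono) auto
  finally show ?thesis unfolding q_def .
qed

text \<open>From \<open>k\<Gamma>\<^sub>k = L\<^sub>k\<gamma>\<^sub>k\<^sup>2 < C\<gamma>\<^sub>k\<^sup>2\<^sup>-\<^sup>p\<close> each step has \<open>\<gamma>\<^sub>k \<ge> (k\<Gamma>\<^sub>k/C)\<^sup>q\<close>, and the telescoping
  bound on \<open>\<Sigma> \<gamma>\<^sub>k/\<surd>\<Gamma>\<^sub>k\<close> turns this into a bound on \<open>\<Gamma>\<^sub>K\<close>.\<close>
lemma ucgs_Gamma_power_bound:
  fixes L \<gamma> :: "nat \<Rightarrow> real" and C p :: real
  assumes "K \<ge> 1" "C > 0" "0 \<le> p" "p \<le> 1"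
    and step: "\<forall>k\<in>{1..K}. 0 < L k \<and> 0 < \<gamma> k \<and> \<gamma> k \<le> 1 \<and> L k < C * \<gamma> k powr (- p)"
    and "\<gamma> 1 = 1" and rec: "\<forall>k\<in>{2..K}. ucgs_Gamma L \<gamma> k = (1 - \<gamma> k) * ucgs_Gamma L \<gamma> (k - 1)"
  shows "real K * (real K * ucgs_Gamma L \<gamma> K) powr (1 / (2 - p)) \<le> 4 * C powr (1 / (2 - p))"
proof -
  define q where "q = 1 / (2 - p)"
  define \<Gamma> where "\<Gamma> = ucgs_Gamma L \<gamma>"
  have q: "1/2 \<le> q" "q \<le> 1" using assms(3,4) by (auto simp: q_def field_simps)
  have pos: "\<forall>k\<in>{1..K}. 0 < \<Gamma> k \<and> 0 < \<gamma> k \<and> \<gamma> k \<le> 1"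
    using step by (auto simp: \<Gamma>_def ucgs_Gamma_def)
  have "\<Gamma> K > 0" using pos \<open>K \<ge> 1\<close> by simp
  have each: "real k powr q * \<Gamma> K powr (q - 1/2) / C powr q \<le> \<gamma> k / sqrt (\<Gamma> k)"
    if k: "k \<in> {1..K}" for k
  proof -
    have "0 < \<gamma> k" "L k < C * \<gamma> k powr (- p)" using step k by auto
    have "real k * \<Gamma> k = L k * \<gamma> k powr 2"
      using k \<open>0 < \<gamma> k\<close> by (simp add: \<Gamma>_def ucgs_Gamma_def)
    also have "\<dots> < C * \<gamma> k powr (- p) * \<gamma> k powr 2"
      using \<open>0 < \<gamma> k\<close> \<open>L k < C * \<gamma> k powr (- p)\<close> by simp
    also have "\<dots> = C * \<gamma> k powr (2 - p)" by (simp add: powr_add[symmetric])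
    finally show ?thesis
      unfolding q_def using step_div_sqrt_lower_bound \<open>\<Gamma> K > 0\<close> assms(2-4) pos k
        factor_recursion_antimono[OF pos rec[folded \<Gamma>_def], of k K] by auto
  qed
  have "\<Gamma> K powr (q - 1/2) / C powr q * (real K powr (q + 1) / 2)
      \<le> \<Gamma> K powr (q - 1/2) / C powr q * (\<Sum>k=1..K. real k powr q)"
    using sum_real_powr_ge q by (intro mult_left_mono) auto
  also have "\<dots> \<le> (\<Sum>k=1..K. \<gamma> k / sqrt (\<Gamma> k))"
    unfolding sum_distrib_left using each by (intro sum_mono) (simp add: field_simps)
  also have "\<dots> \<le> 2 / sqrt (\<Gamma> K)"
    using sum_step_div_sqrt_le[OF \<open>\<gamma> 1 = 1\<close> pos rec[folded \<Gamma>_def]] \<open>K \<ge> 1\<close> by simp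
  finally have bound: "\<Gamma> K powr (q - 1/2) * sqrt (\<Gamma> K) * real K powr (q + 1) \<le> 4 * C powr q"
    using \<open>\<Gamma> K > 0\<close> \<open>C > 0\<close> by (simp add: field_simps)
  have "\<Gamma> K powr (q - 1/2) * sqrt (\<Gamma> K) = \<Gamma> K powr q"
    using \<open>\<Gamma> K > 0\<close> by (simp add: powr_half_sqrt[symmetric] powr_add[symmetric])
  moreover have "real K powr (q + 1) = real K powr q * real K"
    using \<open>K \<ge> 1\<close> by (simp add: powr_add)
  ultimately have "real K * (real K * \<Gamma> K) powr q
      = \<Gamma> K powr (q - 1/2) * sqrt (\<Gamma> K) * real K powr (q + 1)"
    using \<open>\<Gamma> K > 0\<close> by (simp add: powr_mult)
  thus ?thesis
    using bound by (simp add: \<Gamma>_def q_def)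
qed

lemma ucgs_iteration_count:
  fixes L \<gamma> :: "nat \<Rightarrow> real" and C E p :: real
  assumes "K \<ge> 1" "C > 0" "E > 0" "0 \<le> p" "p \<le> 1"
    and step: "\<forall>k\<in>{1..K}. 0 < L k \<and> 0 < \<gamma> k \<and> \<gamma> k \<le> 1 \<and> L k < C * \<gamma> k powr (- p)"
    and "\<gamma> 1 = 1" and rec: "\<forall>k\<in>{2..K}. ucgs_Gamma L \<gamma> k = (1 - \<gamma> k) * ucgs_Gamma L \<gamma> (k - 1)"
    and big: "E < real K * ucgs_Gamma L \<gamma> K"
  shows "real K < 4 * (C / E) powr (1 / (2 - p))"
proof -
  define q where "q = 1 / (2 - p)"
  have "q > 0" using assms(5) by (simp add: q_def)
  have "E powr q < (real K * ucgs_Gamma L \<gamma> K) powr q"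
    using big \<open>E > 0\<close> \<open>q > 0\<close> by (intro powr_less_mono2) auto
  hence "real K * E powr q < real K * (real K * ucgs_Gamma L \<gamma> K) powr q"
    using \<open>K \<ge> 1\<close> by simp
  also have "\<dots> \<le> 4 * C powr q"
    unfolding q_def by (rule ucgs_Gamma_power_bound[OF assms(1,2,4-8)])
  finally show ?thesis
    using \<open>E > 0\<close> by (simp add: q_def powr_divide field_simps)
qed

section \<open>Runs of UCGS\<close>

lemma ucgs_prefix_mono:
  "ucgs_prefix f G X \<sigma> D \<epsilon> x0 L \<gamma> z x y s T K \<Longrightarrow> K' \<le> K
    \<Longrightarrow> ucgs_prefix f G X \<sigma> D \<epsilon> x0 L \<gamma> z x y s T K'"
  unfolding ucgs_prefix_def by auto

lemma ucgs_prefix_step_sizes: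
  assumes "ucgs_prefix f G X \<sigma> D \<epsilon> x0 L \<gamma> z x y s T K" "k \<in> {1..K}"
  shows "0 < L k" "0 < \<gamma> k" "\<gamma> k \<le> 1" "0 < ucgs_Gamma L \<gamma> k"
    and "k = 1 \<Longrightarrow> \<gamma> k = 1"
    and "k \<ge> 2 \<Longrightarrow> ucgs_Gamma L \<gamma> k = (1 - \<gamma> k) * ucgs_Gamma L \<gamma> (k - 1)"
proof -
  have ok: "ucgs_gamma_ok k (ucgs_Gamma L \<gamma> (k - 1)) (L k) (\<gamma> k)"
    using assms unfolding ucgs_prefix_def ucgs_iter_def ucgs_trial_def by blast
  thus "0 < L k" "0 < \<gamma> k" "\<gamma> k \<le> 1" "k = 1 \<Longrightarrow> \<gamma> k = 1"
    unfolding ucgs_gamma_ok_def by auto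
  thus "0 < ucgs_Gamma L \<gamma> k"
    using assms(2) by (simp add: ucgs_Gamma_def)
  show "k \<ge> 2 \<Longrightarrow> ucgs_Gamma L \<gamma> k = (1 - \<gamma> k) * ucgs_Gamma L \<gamma> (k - 1)"
    using ok unfolding ucgs_gamma_ok_def by (simp add: ucgs_Gamma_def mult.commute)
qed

locale ucgs_problem =
  fixes X :: "'a::real_inner set" and f :: "'a \<Rightarrow> real" and G :: "'a \<Rightarrow> 'a"
    and \<nu> M \<sigma> \<epsilon> :: real and x0 :: 'a
  assumes bounded_X: "bounded X" and convex_X: "convex X" and diameter_pos: "diameter X > 0"
    and convex_f: "convex_on X f"
    and gradient: "\<forall>x\<in>X. (f has_derivative (\<lambda>h. inner (G x) h)) (at x)"
    and \<nu>: "0 \<le> \<nu>" "\<nu> \<le> 1" and M: "M > 0"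
    and holder: "\<forall>x\<in>X. \<forall>y\<in>X. norm (G x - G y) \<le> M * norm (x - y) powr \<nu>"
    and \<sigma>: "\<sigma> \<ge> 0" and \<epsilon>: "\<epsilon> > 0" and x0: "x0 \<in> X"
begin

abbreviation "D \<equiv> diameter X"

lemma norm_diff_le_diameter: "a \<in> X \<Longrightarrow> b \<in> X \<Longrightarrow> (norm (a - b))^2 \<le> D^2"
  using diameter_bounded_bound[OF bounded_X, of a b] by (intro power_mono) (auto simp: dist_norm)

end

locale ucgs_execution = ucgs_problem +
  fixes L \<gamma> :: "nat \<Rightarrow> real" and z x y s :: "nat \<Rightarrow> 'a" and T :: "nat \<Rightarrow> nat" and K :: nat
  assumes prefix: "ucgs_prefix f G X \<sigma> (diameter X) \<epsilon> x0 L \<gamma> z x y s T K"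
begin

abbreviation "\<Gamma> \<equiv> ucgs_Gamma L \<gamma>"

lemma iteration: "k \<in> {1..K} \<Longrightarrow> ucgs_iter f G X \<sigma> D \<epsilon> L \<gamma> z x y s T k"
  using prefix unfolding ucgs_prefix_def by blast

lemmas step_sizes = ucgs_prefix_step_sizes[OF prefix]

lemma iterates_in: "k \<le> K \<Longrightarrow> x k \<in> X \<and> y k \<in> X"
proof (induction k)
  case 0
  thus ?case using prefix x0 unfolding ucgs_prefix_def by simp
next
  case (Suc k)
  hence k: "Suc k \<in> {1..K}" and "x k \<in> X" "y k \<in> X" by auto
  have "acgm_run X \<sigma> D (G (z (Suc k))) (x k) (L (Suc k) * \<gamma> (Suc k))
      (L (Suc k) * \<gamma> (Suc k) * D^2 / real (Suc k)) (T (Suc k)) (x (Suc k))"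
    and y: "y (Suc k) = (1 - \<gamma> (Suc k)) *\<^sub>R y k + \<gamma> (Suc k) *\<^sub>R x (Suc k)"
    using iteration[OF k] unfolding ucgs_iter_def ucgs_trial_def by auto
  hence "x (Suc k) \<in> X" using acgm_run_output(1) convex_X \<open>x k \<in> X\<close> by blast
  thus ?case
    using convexD_alt[OF convex_X \<open>y k \<in> X\<close>] y step_sizes[OF k] by auto
qed

lemma extrapolation_in:
  assumes "k \<in> {1..K}"
  shows "z k \<in> X"
proof -
  have "z k = (1 - \<gamma> k) *\<^sub>R y (k - 1) + \<gamma> k *\<^sub>R x (k - 1)"
    using iteration[OF assms] unfolding ucgs_iter_def ucgs_trial_def by blast
  moreover have "x (k - 1) \<in> X" "y (k - 1) \<in> X" using iterates_in[of "k - 1"] assms by auto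
  ultimately show ?thesis
    using convexD_alt[OF convex_X] step_sizes(2,3)[OF assms] by auto
qed

lemma ell_le: "k \<in> {1..K} \<Longrightarrow> w \<in> X \<Longrightarrow> ucgs_ell f G L \<gamma> z k w \<le> f w"
proof (induction k)
  case (Suc k)
  have lin: "f (z (Suc k)) + inner (G (z (Suc k))) (w - z (Suc k)) \<le> f w"
    using convex_on_gradient_inequality[OF convex_f] gradient extrapolation_in Suc.prems by blast
  show ?case
  proof (cases "k = 0")
    case True
    thus ?thesis using lin ucgs_ell_1[of L \<gamma> f G z w] step_sizes[of 1] Suc.prems by simp
  next
    case False
    have k2: "2 \<le> Suc k" using False by simp
    have "\<Gamma> (Suc k) \<noteq> 0" using step_sizes(4)[OF Suc.prems(1)] by simp
    from ucgs_ell_recursion[OF k2 this step_sizes(6)[OF Suc.prems(1) k2], of f G z w]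
    have "ucgs_ell f G L \<gamma> z (Suc k) w = (1 - \<gamma> (Suc k)) * ucgs_ell f G L \<gamma> z k w
        + \<gamma> (Suc k) * (f (z (Suc k)) + inner (G (z (Suc k))) (w - z (Suc k)))"
      by simp
    also have "\<dots> \<le> (1 - \<gamma> (Suc k)) * f w + \<gamma> (Suc k) * f w"
      using Suc False lin step_sizes[of "Suc k"] by (intro add_mono mult_left_mono) auto
    finally show ?thesis by (simp add: algebra_simps)
  qed
qed simp

lemma potential_step:
  assumes k: "k \<in> {1..K}" and "w \<in> X"
  shows "f (y k) \<le> (1 - \<gamma> k) * f (y (k - 1)) + \<gamma> k * (f (z k) + inner (G (z k)) (w - z k))
      + real k * \<Gamma> k / 2 * ((norm (w - x (k - 1)))^2 - (norm (w - x k))^2)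
      + \<Gamma> k * D^2 + \<epsilon> / 2 * \<gamma> k"
proof -
  have z: "z k = (1 - \<gamma> k) *\<^sub>R y (k - 1) + \<gamma> k *\<^sub>R x (k - 1)"
    and run: "acgm_run X \<sigma> D (G (z k)) (x (k - 1)) (L k * \<gamma> k)
        (L k * \<gamma> k * D^2 / real k) (T k) (x k)"
    and y: "y k = (1 - \<gamma> k) *\<^sub>R y (k - 1) + \<gamma> k *\<^sub>R x k"
    and accept: "ucgs_accept f G \<epsilon> (L k) (\<gamma> k) (z k) (y k)"
    using iteration[OF k] unfolding ucgs_iter_def ucgs_trial_def by auto
  have "x (k - 1) \<in> X" "y (k - 1) \<in> X" using iterates_in[of "k - 1"] k by auto
  hence "inner (acgm_grad (G (z k)) (x (k - 1)) (L k * \<gamma> k) (x k)) (x k - w)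
      \<le> L k * \<gamma> k * D^2 / real k"
    using acgm_run_output(2)[OF convex_X _ run] \<open>w \<in> X\<close> by blast
  from ucgs_step_inequality[OF convex_X convex_f gradient \<open>x (k - 1) \<in> X\<close> \<open>y (k - 1) \<in> X\<close>
      step_sizes(2,3)[OF k] z y this accept]
  moreover have "L k * (\<gamma> k)^2 = real k * \<Gamma> k"
    using k by (simp add: ucgs_Gamma_def)
  moreover have "\<gamma> k * (L k * \<gamma> k * D^2 / real k) = \<Gamma> k * D^2"
    by (simp add: ucgs_Gamma_def power2_eq_square)
  ultimately show ?thesis by simp
qed

text \<open>Each step adds \<open>\<Gamma>\<^sub>kD\<^sup>2\<close> from the ACGM threshold \<open>\<eta>\<^sub>k\<close>, and at most \<open>\<Gamma>\<^sub>kD\<^sup>2/2\<close> because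
  the weight of the distance term grows from the inherited \<open>(k - 1)\<Gamma>\<^sub>k\<close> to \<open>k\<Gamma>\<^sub>k\<close>.\<close>
lemma potential_bound:
  "k \<in> {1..K} \<Longrightarrow> w \<in> X \<Longrightarrow> f (y k) + real k * \<Gamma> k / 2 * (norm (w - x k))^2
      \<le> ucgs_ell f G L \<gamma> z k w + 3 / 2 * real k * \<Gamma> k * D^2 + \<epsilon> / 2"
proof (induction k)
  case (Suc k)
  have "x k \<in> X" using iterates_in[of k] Suc.prems by simp
  hence "(norm (w - x k))^2 \<le> D^2" using norm_diff_le_diameter Suc.prems by auto
  have \<Gamma>: "0 < \<Gamma> (Suc k)" using step_sizes(4)[OF Suc.prems(1)] .
  hence a: "\<Gamma> (Suc k) * (norm (w - x k))^2 \<le> \<Gamma> (Suc k) * D^2"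
    using \<open>(norm (w - x k))^2 \<le> D^2\<close> by (intro mult_left_mono) auto
  note step = potential_step[OF Suc.prems, simplified]
  show ?case
  proof (cases "k = 0")
    case True
    have "ucgs_ell f G L \<gamma> z 1 w = f (z 1) + inner (G (z 1)) (w - z 1)"
      by (rule ucgs_ell_1) (use \<Gamma> step_sizes(5)[OF Suc.prems(1)] True in auto)
    thus ?thesis
      using a step step_sizes(5)[OF Suc.prems(1)] True
      by (simp add: algebra_simps diff_divide_distrib)
  next
    case False
    have k2: "2 \<le> Suc k" using False by simp
    let ?g = "\<gamma> (Suc k)"
    have "?g \<le> 1" using step_sizes(3)[OF Suc.prems(1)] .
    have rec: "\<Gamma> (Suc k) = (1 - ?g) * \<Gamma> k" using step_sizes(6)[OF Suc.prems(1) k2] by simp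
    have "(1 - ?g) * (f (y k) + real k * \<Gamma> k / 2 * (norm (w - x k))^2)
        \<le> (1 - ?g) * (ucgs_ell f G L \<gamma> z k w + 3 / 2 * real k * \<Gamma> k * D^2 + \<epsilon> / 2)"
      using Suc False \<open>?g \<le> 1\<close> by (intro mult_left_mono) auto
    moreover have "ucgs_ell f G L \<gamma> z (Suc k) w = (1 - ?g) * ucgs_ell f G L \<gamma> z k w
        + ?g * (f (z (Suc k)) + inner (G (z (Suc k))) (w - z (Suc k)))"
      using ucgs_ell_recursion[OF k2 _ step_sizes(6)[OF Suc.prems(1) k2]] \<Gamma> by simp
    ultimately show ?thesis
      using step a unfolding rec by (simp add: algebra_simps add_divide_distrib diff_divide_distrib)
  qed
qed simp

lemma L_upper_bound:
  assumes "k \<in> {1..K}"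
  shows "L k < 2 * M powr (2 / (1 + \<nu>)) * \<epsilon> powr (- ((1 - \<nu>) / (1 + \<nu>)))
           * \<gamma> k powr (- ((1 - \<nu>) / (1 + \<nu>)))"
proof -
  obtain \<gamma>' z' x' y' T' where
    trial: "ucgs_trial G X \<sigma> D k (\<Gamma> (k - 1)) (x (k - 1)) (y (k - 1)) (L k / 2) \<gamma>' z' x' y' T'"
    and rejected: "\<not> ucgs_accept f G \<epsilon> (L k / 2) \<gamma>' z' y'"
    and accepted: "ucgs_gamma_ok k (\<Gamma> (k - 1)) (L k) (\<gamma> k)"
    using iteration[OF assms] unfolding ucgs_iter_def ucgs_trial_def by blast
  have "x (k - 1) \<in> X" "y (k - 1) \<in> X" using iterates_in[of "k - 1"] assms by auto
  moreover have "\<Gamma> (k - 1) \<ge> 0" if "k \<noteq> 1"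
    using step_sizes(4)[of "k - 1"] that assms by force
  ultimately show ?thesis
    using ucgs_backtracking_bound[OF convex_X gradient \<nu> M holder \<epsilon> _ _ _ _ accepted trial rejected]
      assms by auto
qed

lemma inner_calls_bound:
  assumes "k \<in> {1..K}"
  shows "real (T k) \<le> (7 * \<sigma> + 6) * real k + 1"
proof -
  obtain us vs where steps:
    "acgm_steps X \<sigma> D (G (z k)) (x (k - 1)) (L k * \<gamma> k) (L k * \<gamma> k * D^2 / real k) us vs (T k)"
    using iteration[OF assms] unfolding ucgs_iter_def ucgs_trial_def acgm_run_def by blast
  have "x (k - 1) \<in> X" using iterates_in[of "k - 1"] assms by auto
  from acgm_steps_count[OF bounded_X convex_X diameter_pos this _ \<sigma> _ steps] show ?thesis
    using step_sizes(1,2)[OF assms] assms by auto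
qed

lemma model_near_minimizer:
  assumes "K \<ge> 1"
  obtains "s K \<in> X"
    and "\<forall>w\<in>X. ucgs_ell f G L \<gamma> z K (s K) \<le> ucgs_ell f G L \<gamma> z K w + ucgs_epsk \<sigma> D L \<gamma> K"
  using iteration[of K] assms unfolding ucgs_iter_def by auto

lemma Gamma_lower_bound_if_not_stopped:
  assumes "K \<ge> 1" "\<not> ucgs_stop f G \<sigma> D \<epsilon> L \<gamma> z y s K"
  shows "\<epsilon> < real K * \<Gamma> K * ((3 + \<sigma>) * D^2)"
proof (rule ccontr)
  assume "\<not> ?thesis"
  hence small: "3 * (real K * \<Gamma> K * D^2) + \<sigma> * (real K * \<Gamma> K * D^2) \<le> \<epsilon>"
    by (simp add: algebra_simps)
  obtain "s K \<in> X" using model_near_minimizer[OF assms(1)] .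
  have "0 \<le> real K * \<Gamma> K / 2 * (norm (s K - x K))^2"
    using step_sizes(4)[of K] assms(1) by simp
  hence "f (y K) \<le> ucgs_ell f G L \<gamma> z K (s K) + 3 / 2 * (real K * \<Gamma> K * D^2) + \<epsilon> / 2"
    using potential_bound[of K "s K"] \<open>s K \<in> X\<close> assms(1) by simp
  moreover have "ucgs_epsk \<sigma> D L \<gamma> K = \<sigma> * (real K * \<Gamma> K * D^2) / 2"
    using assms(1) by (simp add: ucgs_epsk_def ucgs_Gamma_def)
  ultimately have "ucgs_stop f G \<sigma> D \<epsilon> L \<gamma> z y s K"
    using small unfolding ucgs_stop_def by linarith
  thus False using assms(2) by contradiction
qed

lemma eps_solution_if_stopped:
  assumes "K \<ge> 1" "ucgs_stop f G \<sigma> D \<epsilon> L \<gamma> z y s K"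
  shows "f (y K) - (INF w\<in>X. f w) \<le> \<epsilon>"
proof -
  obtain "s K \<in> X"
    and s_min: "\<forall>w\<in>X. ucgs_ell f G L \<gamma> z K (s K) \<le> ucgs_ell f G L \<gamma> z K w + ucgs_epsk \<sigma> D L \<gamma> K"
    using model_near_minimizer[OF assms(1)] .
  have "f (y K) - \<epsilon> \<le> f w" if "w \<in> X" for w
    using assms s_min ell_le[of K w] that unfolding ucgs_stop_def by fastforce
  hence "f (y K) - \<epsilon> \<le> (INF w\<in>X. f w)"
    using x0 by (intro cINF_greatest) auto
  thus ?thesis by simp
qed

end

section \<open>Complexity bounds\<close>

lemma N_grad_ratio:
  fixes \<sigma> \<nu> M D \<epsilon> :: real
  assumes \<nu>: "0 \<le> \<nu>" and "M > 0" "D > 0" "\<sigma> \<ge> 0" "\<epsilon> > 0"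
  shows "(2 * M powr (2 / (1 + \<nu>)) * \<epsilon> powr (- ((1 - \<nu>) / (1 + \<nu>)))) / (\<epsilon> / ((3 + \<sigma>) * D^2))
    = 2 * (((3 + \<sigma>) powr ((1 + \<nu>) / 2) * M * D powr (1 + \<nu>)) / \<epsilon>) powr (2 / (1 + \<nu>))"
proof -
  have e: "(1 + \<nu>) / 2 * (2 / (1 + \<nu>)) = 1" "(1 + \<nu>) * (2 / (1 + \<nu>)) = 2"
    "- ((1 - \<nu>) / (1 + \<nu>)) - 1 = - (2 / (1 + \<nu>))"
    using \<nu> by (auto simp: field_simps)
  have "((3 + \<sigma>) powr ((1 + \<nu>) / 2)) powr (2 / (1 + \<nu>)) = 3 + \<sigma>"
    using assms by (simp only: powr_powr e(1)) simp
  moreover have "(D powr (1 + \<nu>)) powr (2 / (1 + \<nu>)) = D^2"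
    using assms by (simp only: powr_powr e(2)) simp
  ultimately have W: "(((3 + \<sigma>) powr ((1 + \<nu>) / 2) * M * D powr (1 + \<nu>)) / \<epsilon>) powr (2 / (1 + \<nu>))
      = (3 + \<sigma>) * M powr (2 / (1 + \<nu>)) * D^2 / \<epsilon> powr (2 / (1 + \<nu>))"
    using assms by (simp add: powr_mult powr_divide)
  have "\<epsilon> powr (- ((1 - \<nu>) / (1 + \<nu>))) / \<epsilon> powr 1 = \<epsilon> powr (- (2 / (1 + \<nu>)))"
    by (simp only: powr_diff[symmetric] e(3))
  hence \<epsilon>: "\<epsilon> powr (- ((1 - \<nu>) / (1 + \<nu>))) / \<epsilon> = 1 / \<epsilon> powr (2 / (1 + \<nu>))"
    using \<open>\<epsilon> > 0\<close> by (simp add: powr_minus_divide)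
  have "(2 * M powr (2 / (1 + \<nu>)) * \<epsilon> powr (- ((1 - \<nu>) / (1 + \<nu>)))) / (\<epsilon> / ((3 + \<sigma>) * D^2))
      = 2 * (3 + \<sigma>) * M powr (2 / (1 + \<nu>)) * D^2 * (\<epsilon> powr (- ((1 - \<nu>) / (1 + \<nu>))) / \<epsilon>)"
    using \<open>\<epsilon> > 0\<close> by (simp add: field_simps)
  also have "\<dots> = 2 * ((3 + \<sigma>) * M powr (2 / (1 + \<nu>)) * D^2 / \<epsilon> powr (2 / (1 + \<nu>)))"
    unfolding \<epsilon> by simp
  finally show ?thesis unfolding W .
qed

lemma N_grad_ge:
  fixes \<sigma> \<nu> M D \<epsilon> :: real
  assumes \<nu>: "0 \<le> \<nu>" "\<nu> \<le> 1" and "M > 0" "D > 0" "\<sigma> \<ge> 0" "\<epsilon> > 0"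
  shows "8 * ((2 * M powr (2 / (1 + \<nu>)) * \<epsilon> powr (- ((1 - \<nu>) / (1 + \<nu>))))
      / (\<epsilon> / ((3 + \<sigma>) * D^2))) powr (1 / (2 - (1 - \<nu>) / (1 + \<nu>))) \<le> real (N_grad \<sigma> \<nu> M D \<epsilon>)"
proof -
  define W where "W = ((3 + \<sigma>) powr ((1 + \<nu>) / 2) * M * D powr (1 + \<nu>)) / \<epsilon>"
  define q where "q = 1 / (2 - (1 - \<nu>) / (1 + \<nu>))"
  have q: "q = (1 + \<nu>) / (1 + 3 * \<nu>)"
    using \<nu> by (simp add: q_def field_simps)
  hence "q \<le> 1" using \<nu> by simp
  have cancel: "\<And>a b :: real. a \<noteq> 0 \<Longrightarrow> 2 / a * (a / b) = 2 / b" by simp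
  have "2 / (1 + \<nu>) * q = 2 / (1 + 3 * \<nu>)" unfolding q by (rule cancel) (use \<nu> in simp)
  hence exponent: "2 * q / (1 + \<nu>) = 2 / (1 + 3 * \<nu>)" by simp
  have "(2 * W powr (2 / (1 + \<nu>))) powr q = 2 powr q * W powr (2 / (1 + 3 * \<nu>))"
    using assms by (simp add: W_def powr_mult powr_powr exponent)
  also have "\<dots> \<le> 2 * W powr (2 / (1 + 3 * \<nu>))"
    using powr_mono[of q 1 2] \<open>q \<le> 1\<close> by (intro mult_right_mono) auto
  finally have "8 * (2 * W powr (2 / (1 + \<nu>))) powr q \<le> 16 * W powr (2 / (1 + 3 * \<nu>))"
    by simp
  also have "\<dots> \<le> real (N_grad \<sigma> \<nu> M D \<epsilon>)"
    unfolding N_grad_def W_def by (rule real_nat_ceiling_ge)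
  finally show ?thesis
    unfolding N_grad_ratio[OF \<nu>(1) assms(3-6)] W_def q_def .
qed

lemma N_lin_ge_sum:
  fixes \<sigma> :: real and n :: "nat \<Rightarrow> nat"
  assumes "K \<le> N" "\<sigma> \<ge> 0" and n: "\<forall>k\<in>{1..K}. real (n k) \<le> (7 * \<sigma> + 6) * real k + 2"
  shows "(\<Sum>k=1..K. n k) \<le> N_lin \<sigma> N"
proof -
  have "real (\<Sum>k=1..K. n k) \<le> (\<Sum>k=1..K. (7 * \<sigma> + 6) * real k + 2)"
    unfolding of_nat_sum using n by (intro sum_mono) auto
  also have "\<dots> = (7 * \<sigma> + 6) * (real K * (real K + 1)) / 2 + 2 * real K"
    by (induction K) (simp_all add: algebra_simps add_divide_distrib)
  also have "\<dots> \<le> (7 * \<sigma> + 6) * (real N * (real N + 1)) / 2 + 2 * real N"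
  proof -
    have "real K * (real K + 1) \<le> real N * (real N + 1)" using assms(1) by (intro mult_mono) auto
    thus ?thesis using assms(1,2) by (intro add_mono divide_right_mono mult_left_mono) auto
  qed
  also have "\<dots> \<le> (7/2 * \<sigma> + 3) * (real N)^2 + (7/2 * \<sigma> + 6) * real N"
    by (simp add: power2_eq_square field_simps)
  also have "\<dots> \<le> real (N_lin \<sigma> N)"
    unfolding N_lin_def by (rule real_nat_ceiling_ge)
  finally show ?thesis by (simp only: of_nat_le_iff)
qed

context ucgs_problem
begin

lemma N_grad_pos: "1 \<le> N_grad \<sigma> \<nu> M D \<epsilon>"
proof -
  have "0 < 8 * ((2 * M powr (2 / (1 + \<nu>)) * \<epsilon> powr (- ((1 - \<nu>) / (1 + \<nu>))))
      / (\<epsilon> / ((3 + \<sigma>) * D^2))) powr (1 / (2 - (1 - \<nu>) / (1 + \<nu>)))"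
    using M \<epsilon> \<sigma> diameter_pos by simp
  with N_grad_ge[OF \<nu> M diameter_pos \<sigma> \<epsilon>] show ?thesis by linarith
qed

lemma not_stopped_iteration_bound:
  assumes "1 \<le> K" and prefix: "ucgs_prefix f G X \<sigma> D \<epsilon> x0 L \<gamma> z x y s T K"
    and "\<not> ucgs_stop f G \<sigma> D \<epsilon> L \<gamma> z y s K"
  shows "K + 1 \<le> N_grad \<sigma> \<nu> M D \<epsilon>"
proof -
  interpret ucgs_execution X f G \<nu> M \<sigma> \<epsilon> x0 L \<gamma> z x y s T K
    by unfold_locales (fact prefix)
  define p where "p = (1 - \<nu>) / (1 + \<nu>)"
  define C where "C = 2 * M powr (2 / (1 + \<nu>)) * \<epsilon> powr (- p)"
  define E where "E = \<epsilon> / ((3 + \<sigma>) * D^2)"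
  have "real K < 4 * (C / E) powr (1 / (2 - p))"
  proof (rule ucgs_iteration_count[OF assms(1)])
    show "C > 0" "E > 0" "0 \<le> p" "p \<le> 1"
      using M \<epsilon> \<sigma> diameter_pos \<nu> by (auto simp: C_def E_def p_def)
    show "\<forall>k\<in>{1..K}. 0 < L k \<and> 0 < \<gamma> k \<and> \<gamma> k \<le> 1 \<and> L k < C * \<gamma> k powr - p"
      using step_sizes(1-3) L_upper_bound unfolding C_def p_def by blast
    show "\<gamma> 1 = 1" "\<forall>k\<in>{2..K}. \<Gamma> k = (1 - \<gamma> k) * \<Gamma> (k - 1)"
      using step_sizes(5,6) assms(1) by auto
    show "E < real K * \<Gamma> K"
      using Gamma_lower_bound_if_not_stopped[OF assms(1,3)] \<sigma> diameter_pos
      by (simp add: E_def divide_less_eq mult.assoc)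
  qed
  moreover have "8 * (C / E) powr (1 / (2 - p)) \<le> real (N_grad \<sigma> \<nu> M D \<epsilon>)"
    using N_grad_ge[OF \<nu> M diameter_pos \<sigma> \<epsilon>] unfolding C_def E_def p_def .
  ultimately show ?thesis using assms(1) by linarith
qed

lemma iterations_le_N_grad:
  assumes "1 \<le> K" "ucgs_prefix f G X \<sigma> D \<epsilon> x0 L \<gamma> z x y s T (K - 1)"
    and "\<forall>k\<in>{1..<K}. \<not> ucgs_stop f G \<sigma> D \<epsilon> L \<gamma> z y s k"
  shows "K \<le> N_grad \<sigma> \<nu> M D \<epsilon>"
proof (cases "K = 1")
  case True
  thus ?thesis using N_grad_pos by simp
next
  case False
  thus ?thesis using not_stopped_iteration_bound[of "K - 1", OF _ assms(2)] assms(1,3) by auto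
qed

lemma stopped_run_bounds:
  assumes "1 \<le> K" and prefix: "ucgs_prefix f G X \<sigma> D \<epsilon> x0 L \<gamma> z x y s T K"
    and "ucgs_stop f G \<sigma> D \<epsilon> L \<gamma> z y s K"
  shows "K \<le> N_grad \<sigma> \<nu> M D \<epsilon>" and "(\<Sum>k=1..K. T k + 1) \<le> N_lin \<sigma> (N_grad \<sigma> \<nu> M D \<epsilon>)"
    and "f (y K) - (INF w\<in>X. f w) \<le> \<epsilon>"
proof -
  interpret ucgs_execution X f G \<nu> M \<sigma> \<epsilon> x0 L \<gamma> z x y s T K
    by unfold_locales (fact prefix)
  show "K \<le> N_grad \<sigma> \<nu> M D \<epsilon>"
    using iterations_le_N_grad[OF assms(1) ucgs_prefix_mono[OF prefix]] prefix
    unfolding ucgs_prefix_def by auto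
  moreover have "\<forall>k\<in>{1..K}. real (T k + 1) \<le> (7 * \<sigma> + 6) * real k + 2"
    using inner_calls_bound by fastforce
  ultimately show "(\<Sum>k=1..K. T k + 1) \<le> N_lin \<sigma> (N_grad \<sigma> \<nu> M D \<epsilon>)"
    by (rule N_lin_ge_sum[OF _ \<sigma>])
  show "f (y K) - (INF w\<in>X. f w) \<le> \<epsilon>"
    using eps_solution_if_stopped assms(1,3) .
qed

lemma running_acgm_bound:
  assumes "1 \<le> K" and prefix: "ucgs_prefix f G X \<sigma> D \<epsilon> x0 L \<gamma> z x y s T (K - 1)"
    and "\<forall>k\<in>{1..<K}. \<not> ucgs_stop f G \<sigma> D \<epsilon> L \<gamma> z y s k"
    and "ucgs_gamma_ok K (ucgs_Gamma L \<gamma> (K - 1)) Lt \<gamma>t"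
    and steps: "acgm_steps X \<sigma> D (G zt) (x (K - 1)) (Lt * \<gamma>t) (Lt * \<gamma>t * D^2 / real K) us vs t"
  shows "(\<Sum>k=1..K-1. T k + 1) + t \<le> N_lin \<sigma> (N_grad \<sigma> \<nu> M D \<epsilon>)"
proof -
  interpret ucgs_execution X f G \<nu> M \<sigma> \<epsilon> x0 L \<gamma> z x y s T "K - 1"
    by unfold_locales (fact prefix)
  have "x (K - 1) \<in> X" "Lt * \<gamma>t > 0"
    using iterates_in[of "K - 1"] assms(4) unfolding ucgs_gamma_ok_def by auto
  hence "real t \<le> (7 * \<sigma> + 6) * real K + 1"
    using acgm_steps_count[OF bounded_X convex_X diameter_pos _ _ \<sigma> assms(1) steps] by blast
  hence "\<forall>k\<in>{1..K}. real (if k = K then t else T k + 1) \<le> (7 * \<sigma> + 6) * real k + 2"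
    using inner_calls_bound by fastforce
  hence "(\<Sum>k=1..K. if k = K then t else T k + 1) \<le> N_lin \<sigma> (N_grad \<sigma> \<nu> M D \<epsilon>)"
    by (rule N_lin_ge_sum[OF iterations_le_N_grad[OF assms(1-3)] \<sigma>])
  moreover have "(\<Sum>k=1..K. if k = K then t else T k + 1) = (\<Sum>k=1..K-1. T k + 1) + t"
  proof -
    obtain j where "K = Suc j" using assms(1) by (cases K) auto
    thus ?thesis by simp
  qed
  ultimately show ?thesis by simp
qed

end

theorem mainTheorem5:
  fixes X :: "'a::euclidean_space set" and f :: "'a \<Rightarrow> real" and G :: "'a \<Rightarrow> 'a"
    and \<nu> M \<sigma> \<epsilon> :: real and x0 :: 'a
  assumes X: "X \<noteq> {}" "compact X" "convex X"
    and Xnontriv: "diameter X > 0"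
    and fconv: "convex_on X f"
    and fgrad: "\<forall>x\<in>X. (f has_derivative (\<lambda>h. inner (G x) h)) (at x)"
    and nu: "0 \<le> \<nu>" "\<nu> \<le> 1" and M: "M > 0"
    and holder: "\<forall>x\<in>X. \<forall>y\<in>X. norm (G x - G y) \<le> M * norm (x - y) powr \<nu>"
    and sigma: "\<sigma> \<ge> 0" and eps: "\<epsilon> > 0" and x0: "x0 \<in> X"
  shows
    \<comment> \<open>(1) while not stopped, fewer than N_grad outer iterations have been done\<close>
    "(\<forall>K L \<gamma> z x y s T. 1 \<le> K \<and>
        ucgs_prefix f G X \<sigma> (diameter X) \<epsilon> x0 L \<gamma> z x y s T K \<and>
        \<not> ucgs_stop f G \<sigma> (diameter X) \<epsilon> L \<gamma> z y s K
        \<longrightarrow> K + 1 \<le> N_grad \<sigma> \<nu> M (diameter X) \<epsilon>)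
   \<and>
    \<comment> \<open>(2) at stopping: bounds on gradients and linear optimizations, output is an eps-solution\<close>
    (\<forall>K L \<gamma> z x y s T. 1 \<le> K \<and>
        ucgs_prefix f G X \<sigma> (diameter X) \<epsilon> x0 L \<gamma> z x y s T K \<and>
        ucgs_stop f G \<sigma> (diameter X) \<epsilon> L \<gamma> z y s K
        \<longrightarrow> K \<le> N_grad \<sigma> \<nu> M (diameter X) \<epsilon> \<and>
            (\<Sum>k=1..K. T k + 1) \<le> N_lin \<sigma> (N_grad \<sigma> \<nu> M (diameter X) \<epsilon>) \<and>
            f (y K) - (INF w\<in>X. f w) \<le> \<epsilon>)
   \<and>
    \<comment> \<open>(3) any ACGM run in progress in iteration K stays within the linear-optimization budget\<close>
    (\<forall>K L \<gamma> z x y s T Lt \<gamma>t zt us vs t. 1 \<le> K \<and>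
        ucgs_prefix f G X \<sigma> (diameter X) \<epsilon> x0 L \<gamma> z x y s T (K - 1) \<and>
        (\<forall>k\<in>{1..<K}. \<not> ucgs_stop f G \<sigma> (diameter X) \<epsilon> L \<gamma> z y s k) \<and>
        ucgs_gamma_ok K (ucgs_Gamma L \<gamma> (K - 1)) Lt \<gamma>t \<and>
        zt = (1 - \<gamma>t) *\<^sub>R y (K - 1) + \<gamma>t *\<^sub>R x (K - 1) \<and>
        acgm_steps X \<sigma> (diameter X) (G zt) (x (K - 1)) (Lt * \<gamma>t)
          (Lt * \<gamma>t * (diameter X)^2 / real K) us vs t
        \<longrightarrow> (\<Sum>k=1..K-1. T k + 1) + t \<le> N_lin \<sigma> (N_grad \<sigma> \<nu> M (diameter X) \<epsilon>))"
proof -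
  interpret ucgs_problem X f G \<nu> M \<sigma> \<epsilon> x0
    using assms compact_imp_bounded by unfold_locales auto
  show ?thesis
    by (intro conjI allI impI; elim conjE)
       (blast intro: not_stopped_iteration_bound stopped_run_bounds running_acgm_bound)+
qed

end
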